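(* Under the standing setup, for all $n\ge n_0$, $$\mathbb{E}[\psi_{n,k}]\ge|E_n|^{-1}K^{-1}\alpha^{\ell}e^{Pk}\mu(G_{n,k}),$$ and moreover $$\lim_{n\to\infty}\frac1k\log\mathbb{E}[\psi_{n,k}]=P+\log\alpha.$$
   Context: Standing setup. $\mathcal{A}$ is a finite alphabet, $X\subset\mathcal{A}^{\mathbb{Z}}$ a non-trivial topologically mixing SFT with left shift $\sigma$, $f:X\to\mathbb{R}$ H\"older continuous with pressure $P=P_X(f)$, and $\mu$ the Gibbs measure (unique equilibrium state) of $f$, with entropy $h(\mu)$. $B_m(X)$ is the set of words of length $m$ in $X$; $[w]=\{x\in X:x_0\dots x_{|w|-1}=w\}$, $\mu(w)=\mu([w])$. Words are written $u=u_1\dots u_k$, $u_i^j=u_i\dots u_j$. For $w\in B_m(X)$, $S_mf(w)=\sup_{x\in[w]}\sum_{i=0}^{m-1}f(\sigma^ix)$. $K>1$ is a constant such that: (i) for all $m\ge1$, $x\in X$: $K^{-1}\le\mu(x_0\dots x_{m-1})/\exp(-Pm+\sum_{i=0}^{m-1}f(\sigma^ix))\le K$; (ii) $\mu(uv)\le K\mu(u)\mu(v)$ and $\mu(\sigma^{-|u|}[v]\mid[u])\le K\mu(v)$ whenever $uv\in B(X)$; (iii) for some $g_0\ge1$, all $g\ge g_0$ and words $u\in B_m(X)$, $v$: $\mu([u]\cap\sigma^{-(m+g)}[v])\ge K^{-1}\mu(u)\mu(v)$. $\gamma_0=\inf\{\gamma>0:\exists n_0\ \forall m\ge n_0\ \forall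 u\in B_m(X),\ \mu(u)\le\gamma^m\}$. Parameters: $\alpha\in(\gamma_0,1]$; $\gamma\in(\gamma_0,\alpha)$; $n_0$ such that $\mu(u)\le\gamma^{|u|}$ for all $u\in B(X)$ with $|u|\ge n_0$; $0<\delta<\frac14\log(\alpha/\gamma)$; $k=k(n)$ with $n/k\to0$ and $k=o(n^2/\log n)$; $\ell=k-n+1$. Random SFT: for each $n$, $\mathcal{F}_n\subset B_n(X)$ is random, each word included independently with probability $1-\alpha$; $\mathbb{E}$ is expectation. For a word $u$ of length $\ge n$, $W_n(u)$ is the set of distinct length-$n$ subwords of $u$, and $\xi_u=1$ if $W_n(u)\cap\mathcal{F}_n=\emptyset$, $\xi_u=0$ otherwise. $E_n=\{u\in B_n(X):|-\frac1n\log\mu(u)-h(\mu)|<\delta\}$, $G_{n,k}=\{u\in B_k(X): u_1^n=u_\ell^k\text{ and }u_1^n\in E_n\}$, and $\psi_{n,k}=|E_n|^{-1}\sum_{u\in G_{n,k}}e^{S_kf(u)}\xi_u$. *)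

theory Defs
  imports "HOL-Probability.Probability" "HOL-Library.Landau_Symbols"
begin

text \<open>Symbolic dynamics over a finite alphabet 'a: points of the full shift are
  bi-infinite sequences int => 'a; words are lists (u = u_1 ... u_k is the list [u_1,...,u_k]).\<close>

definition shift :: "(int \<Rightarrow> 'a) \<Rightarrow> (int \<Rightarrow> 'a)" where
  "shift x = (\<lambda>i. x (i + 1))"

definition word_at :: "(int \<Rightarrow> 'a) \<Rightarrow> int \<Rightarrow> nat \<Rightarrow> 'a list" where
  "word_at x i m = map (\<lambda>j. x (i + int j)) [0..<m]"

definition is_SFT :: "(int \<Rightarrow> 'a) set \<Rightarrow> bool" where
  "is_SFT X \<longleftrightarrow> (\<exists>F :: 'a list set. finite F \<and>
      X = {x. \<forall>i. \<forall>w\<in>F. word_at x i (length w) \<noteq> w})"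

definition Bn :: "(int \<Rightarrow> 'a) set \<Rightarrow> nat \<Rightarrow> 'a list set" where
  "Bn X m = (\<lambda>x. word_at x 0 m) ` X"

definition lang :: "(int \<Rightarrow> 'a) set \<Rightarrow> 'a list set" where
  "lang X = (\<Union>m. Bn X m)"

definition cyl :: "(int \<Rightarrow> 'a) set \<Rightarrow> 'a list \<Rightarrow> (int \<Rightarrow> 'a) set" where
  "cyl X w = {x \<in> X. word_at x 0 (length w) = w}"

text \<open>Topological mixing (with cylinders as basis of the topology).\<close>
definition top_mixing :: "(int \<Rightarrow> 'a) set \<Rightarrow> bool" where
  "top_mixing X \<longleftrightarrow> (\<forall>u\<in>lang X. \<forall>v\<in>lang X. \<exists>N. \<forall>n\<ge>N.
      \<exists>x\<in>X. word_at x 0 (length u) = u \<and> word_at x (int n) (length v) = v)"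

definition nontrivial :: "(int \<Rightarrow> 'a) set \<Rightarrow> bool" where
  "nontrivial X \<longleftrightarrow> (\<exists>x\<in>X. \<exists>y\<in>X. x \<noteq> y)"

text \<open>Hoelder continuity w.r.t. the standard metric d(x,y) = 2^(-min{|i| : x_i ~= y_i}).\<close>
definition holder_cont :: "(int \<Rightarrow> 'a) set \<Rightarrow> ((int \<Rightarrow> 'a) \<Rightarrow> real) \<Rightarrow> bool" where
  "holder_cont X f \<longleftrightarrow> (\<exists>C \<theta>. 0 < \<theta> \<and> \<theta> < 1 \<and>
     (\<forall>x\<in>X. \<forall>y\<in>X. \<forall>m::nat. (\<forall>i. \<bar>i\<bar> \<le> int m \<longrightarrow> x i = y i) \<longrightarrow> \<bar>f x - f y\<bar> \<le> C * \<theta> ^ m))"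

definition birkhoff :: "((int \<Rightarrow> 'a) \<Rightarrow> real) \<Rightarrow> nat \<Rightarrow> (int \<Rightarrow> 'a) \<Rightarrow> real" where
  "birkhoff f m x = (\<Sum>i<m. f ((shift ^^ i) x))"

definition Smf :: "(int \<Rightarrow> 'a) set \<Rightarrow> ((int \<Rightarrow> 'a) \<Rightarrow> real) \<Rightarrow> 'a list \<Rightarrow> real" where
  "Smf X f w = Sup (birkhoff f (length w) ` cyl X w)"

definition pressure :: "(int \<Rightarrow> 'a) set \<Rightarrow> ((int \<Rightarrow> 'a) \<Rightarrow> real) \<Rightarrow> real" where
  "pressure X f = lim (\<lambda>n. ln (\<Sum>w\<in>Bn X n. exp (Smf X f w)) / real n)"

definition shift_space :: "(int \<Rightarrow> 'a) measure" where
  "shift_space = Pi\<^sub>M UNIV (\<lambda>_. count_space UNIV)"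

definition mu :: "(int \<Rightarrow> 'a) measure \<Rightarrow> (int \<Rightarrow> 'a) set \<Rightarrow> 'a list \<Rightarrow> real" where
  "mu M X w = measure M (cyl X w)"

definition inv_prob_on :: "(int \<Rightarrow> 'a) set \<Rightarrow> (int \<Rightarrow> 'a) measure \<Rightarrow> bool" where
  "inv_prob_on X \<nu> \<longleftrightarrow> prob_space \<nu> \<and> sets \<nu> = sets shift_space \<and> X \<in> sets \<nu> \<and>
     measure \<nu> X = 1 \<and>
     (\<forall>A\<in>sets \<nu>. shift -` A \<in> sets \<nu> \<and> measure \<nu> (shift -` A) = measure \<nu> A)"

text \<open>Measure-theoretic (Kolmogorov-Sinai) entropy, computed with the generating
  partition into 0-cylinders.\<close>
definition entropy :: "(int \<Rightarrow> 'a) set \<Rightarrow> (int \<Rightarrow> 'a) measure \<Rightarrow> real" where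
  "entropy X \<nu> = lim (\<lambda>n. (\<Sum>w\<in>Bn X n. - mu \<nu> X w * ln (mu \<nu> X w)) / real n)"

definition equilibrium_state :: "(int \<Rightarrow> 'a) set \<Rightarrow> ((int \<Rightarrow> 'a) \<Rightarrow> real) \<Rightarrow> (int \<Rightarrow> 'a) measure \<Rightarrow> bool" where
  "equilibrium_state X f \<nu> \<longleftrightarrow> inv_prob_on X \<nu> \<and> integrable \<nu> f \<and>
     entropy X \<nu> + (\<integral>x. f x \<partial>\<nu>) = pressure X f"

definition gamma0 :: "(int \<Rightarrow> 'a) measure \<Rightarrow> (int \<Rightarrow> 'a) set \<Rightarrow> real" where
  "gamma0 M X = Inf {\<gamma>. \<gamma> > 0 \<and> (\<exists>n0. \<forall>m\<ge>n0. \<forall>u\<in>Bn X m. mu M X u \<le> \<gamma> ^ m)}"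

definition E_set :: "(int \<Rightarrow> 'a) measure \<Rightarrow> (int \<Rightarrow> 'a) set \<Rightarrow> real \<Rightarrow> nat \<Rightarrow> 'a list set" where
  "E_set M X \<delta> n = {u \<in> Bn X n. \<bar>- (1 / real n) * ln (mu M X u) - entropy X M\<bar> < \<delta>}"

text \<open>G_(n,k): u_1^n = take n u, u_l^k = drop (k - n) u  (l = k - n + 1)\<close>
definition G_set :: "(int \<Rightarrow> 'a) measure \<Rightarrow> (int \<Rightarrow> 'a) set \<Rightarrow> real \<Rightarrow> nat \<Rightarrow> nat \<Rightarrow> 'a list set" where
  "G_set M X \<delta> n k = {u \<in> Bn X k. take n u = drop (k - n) u \<and> take n u \<in> E_set M X \<delta> n}"

definition subwords :: "nat \<Rightarrow> 'a list \<Rightarrow> 'a list set" where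
  "subwords n u = {take n (drop i u) | i. i + n \<le> length u}"

definition xi :: "nat \<Rightarrow> 'a list set \<Rightarrow> 'a list \<Rightarrow> real" where
  "xi n F u = (if subwords n u \<inter> F = {} then 1 else 0)"

text \<open>psi_(n,k) as a function of the realisation F = F_n of the random forbidden set\<close>
definition psi :: "(int \<Rightarrow> 'a) measure \<Rightarrow> (int \<Rightarrow> 'a) set \<Rightarrow> ((int \<Rightarrow> 'a) \<Rightarrow> real) \<Rightarrow> real \<Rightarrow>
    nat \<Rightarrow> nat \<Rightarrow> 'a list set \<Rightarrow> real" where
  "psi M X f \<delta> n k F = (1 / real (card (E_set M X \<delta> n))) *
     (\<Sum>u\<in>G_set M X \<delta> n k. exp (Smf X f u) * xi n F u)"

definition expected_psi :: "(int \<Rightarrow> 'a) measure \<Rightarrow> (int \<Rightarrow> 'a) set \<Rightarrow> ((int \<Rightarrow> 'a) \<Rightarrow> real) \<Rightarrow> real \<Rightarrow>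
    real \<Rightarrow> nat \<Rightarrow> nat \<Rightarrow> real" where
  "expected_psi M X f \<delta> \<alpha> n k =
     measure_pmf.expectation (Pi_pmf (Bn X n) False (\<lambda>_. bernoulli_pmf (1 - \<alpha>)))
       (\<lambda>b. psi M X f \<delta> n k {w \<in> Bn X n. b w})"

end

theory Submission
  imports Defs "HOL-Real_Asymp.Real_Asymp"
begin

text \<open>
  Averaging over the random forbidden set, \<open>\<xi> u\<close> has expectation \<open>\<alpha> ^ card (subwords n u)\<close>.
  A word of length \<open>k\<close> has at most \<open>l = k - n + 1\<close> subwords of length \<open>n\<close>, and the Gibbs property
  gives \<open>exp (S\<^sub>k f u) \<ge> exp (P k) \<mu> u / K\<close>; this is the first inequality.

  For large \<open>n\<close> the set \<open>E\<^sub>n\<close> is nonempty: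
  the block entropies \<open>H\<^sub>n / n\<close> converge to \<open>h(\<mu>)\<close>, so if \<open>E\<^sub>n\<close> were empty there would be both
  an unlikely and a likely word of length \<open>n\<close>; by mixing some orbit sees the first and later the
  second, and \<open>- ln \<mu>\<close> of a sliding window changes by \<open>O(1)\<close> per step, so it passes through \<open>E\<^sub>n\<close>.
  Mixing also gives \<open>\<mu> G\<^sub>n\<^sub>,\<^sub>k \<ge> \<mu>(w)\<^sup>2 / K \<ge> exp (-2 n (h + \<delta>)) / K\<close> for \<open>w \<in> E\<^sub>n\<close>,
  and \<open>card E\<^sub>n \<le> card (UNIV :: 'a set) ^ n\<close>.

  For the upper bound, a word with few distinct subwords has many repeated windows, and among
  them an \<open>n\<close>-separated set \<open>T\<close> containing at least a \<open>1/n\<close> fraction can be chosen. Once an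
  earlier occurrence is fixed for every window in \<open>T\<close>, each of these blocks is determined by the
  preceding prefix, so quasi-multiplicativity bounds the measure of such words by
  \<open>(k K\<^sup>2 \<gamma>\<^sup>n) ^ card T\<close>. Summing over \<open>T\<close> gives
  \<open>E \<psi> \<le> K exp (P k) \<alpha>\<^sup>l (1 + k K\<^sup>2 (\<gamma>/\<alpha>)\<^sup>n)\<^sup>l\<close>, and since \<open>k \<le> n\<^sup>2\<close> the last factor is \<open>exp (o(k))\<close>.
\<close>

section \<open>Words and the shift\<close>

lemma funpow_shift: "(shift ^^ i) x = (\<lambda>j. x (j + int i))"
  by (induction i arbitrary: x) (auto simp: shift_def algebra_simps)

lemma word_at_funpow_shift: "word_at ((shift ^^ i) x) a m = word_at x (a + int i) m"
  by (simp add: word_at_def funpow_shift algebra_simps)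

lemma length_word_at [simp]: "length (word_at x a m) = m"
  by (simp add: word_at_def)

lemma word_at_add: "word_at x a (m + n) = word_at x a m @ word_at x (a + int m) n"
  by (rule nth_equalityI) (auto simp: word_at_def nth_append algebra_simps)

lemma take_drop_word_at:
  "p + q \<le> L \<Longrightarrow> take q (drop p (word_at x a L)) = word_at x (a + int p) q"
  by (rule nth_equalityI) (auto simp: word_at_def algebra_simps)

lemma word_at_eq_iff:
  "word_at x a m = w \<longleftrightarrow> length w = m \<and> (\<forall>j<m. x (a + int j) = w ! j)"
  unfolding word_at_def by (auto intro: nth_equalityI)

lemma is_SFT_funpow_shift_closed:
  assumes "is_SFT X" "x \<in> X"
  shows "(shift ^^ i) x \<in> X"
proof -
  obtain F where F: "X = {x. \<forall>j. \<forall>w\<in>F. word_at x j (length w) \<noteq> w}"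
    using assms(1) unfolding is_SFT_def by blast
  then show ?thesis
    using assms(2) by (auto simp: word_at_funpow_shift)
qed

lemma length_Bn: "w \<in> Bn X m \<Longrightarrow> length w = m"
  by (auto simp: Bn_def)

lemma Bn_subset_lang: "Bn X m \<subseteq> lang X"
  by (auto simp: lang_def)

lemma Bn_subset_lists: "Bn X m \<subseteq> {w. set w \<subseteq> (UNIV :: 'a set) \<and> length w = m}"
  by (auto simp: Bn_def)

lemma finite_Bn: "finite (Bn X m :: 'a::finite list set)"
  using Bn_subset_lists by (rule finite_subset) (rule finite_lists_length_eq, simp)

lemma card_Bn_le: "card (Bn X m :: 'a::finite list set) \<le> CARD('a) ^ m"
proof -
  have "card (Bn X m) \<le> card {w. set w \<subseteq> (UNIV :: 'a set) \<and> length w = m}"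
    using Bn_subset_lists by (rule card_mono[rotated]) (rule finite_lists_length_eq, simp)
  also have "\<dots> = CARD('a) ^ m"
    by (rule card_lists_length_eq) simp
  finally show ?thesis .
qed

lemma word_at_in_Bn: "x \<in> X \<Longrightarrow> word_at x 0 m \<in> Bn X m"
  by (simp add: Bn_def)

lemma take_drop_Bn:
  assumes "is_SFT X" "u \<in> Bn X L" "p + q \<le> L"
  shows "take q (drop p u) \<in> Bn X q"
proof -
  obtain x where x: "x \<in> X" "u = word_at x 0 L"
    using assms(2) by (auto simp: Bn_def)
  then have "take q (drop p u) = word_at ((shift ^^ p) x) 0 q"
    using assms(3) by (simp add: take_drop_word_at word_at_funpow_shift)
  then show ?thesis
    using is_SFT_funpow_shift_closed[OF assms(1) x(1)] by (auto simp: Bn_def)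
qed

lemma take_Bn: "is_SFT X \<Longrightarrow> u \<in> Bn X (m + n) \<Longrightarrow> take m u \<in> Bn X m"
  using take_drop_Bn[of X u "m + n" 0 m] by simp

lemma drop_Bn: "is_SFT X \<Longrightarrow> u \<in> Bn X (m + n) \<Longrightarrow> drop m u \<in> Bn X n"
  using take_drop_Bn[of X u "m + n" m n] length_Bn[of u X "m + n"] by simp

lemma cylinder_in_shift_space: "{x. word_at x 0 (length w) = w} \<in> sets shift_space"
proof -
  have coord: "{x. x (int j) = w ! j} \<in> sets shift_space" for j
  proof -
    have "(\<lambda>x. x (int j)) \<in> measurable shift_space (count_space UNIV)"
      unfolding shift_space_def by (rule measurable_component_singleton) simp
    from measurable_sets[OF this, of "{w ! j}"] show ?thesis
      by (simp add: vimage_def shift_space_def space_PiM)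
  qed
  have "space shift_space = UNIV"
    by (simp add: shift_space_def space_PiM)
  then have univ: "UNIV \<in> sets shift_space"
    using sets.top[of shift_space] by metis
  have "{x. word_at x 0 (length w) = w} = (\<Inter>j<length w. {x. x (int j) = w ! j})"
    by (auto simp: word_at_eq_iff)
  also have "\<dots> \<in> sets shift_space"
    using coord univ by (cases "length w = 0") (auto intro: sets.finite_INT)
  finally show ?thesis .
qed

lemma birkhoff_add: "birkhoff f (m + n) x = birkhoff f m x + birkhoff f n ((shift ^^ m) x)"
proof (induction n)
  case 0
  then show ?case by (simp add: birkhoff_def)
next
  case (Suc n)
  have "(shift ^^ (m + n)) x = (shift ^^ n) ((shift ^^ m) x)"
    by (metis add.commute comp_apply funpow_add)
  then show ?case
    using Suc by (simp add: birkhoff_def)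
qed

section \<open>Repeated windows\<close>

lemma subwords_eq_image: "subwords n u = (\<lambda>i. take n (drop i u)) ` {i. i + n \<le> length u}"
  by (auto simp: subwords_def)

lemma subwords_subset_Bn: "is_SFT X \<Longrightarrow> u \<in> Bn X L \<Longrightarrow> subwords n u \<subseteq> Bn X n"
  using take_drop_Bn[of X u L] length_Bn[of u X L] by (auto simp: subwords_def)

lemma card_subwords_le:
  assumes "n \<le> length u"
  shows "card (subwords n u) \<le> length u - n + 1"
proof -
  have "{i. i + n \<le> length u} = {..length u - n}"
    using assms by auto
  then show ?thesis
    using card_image_le[of "{..length u - n}" "\<lambda>i. take n (drop i u)"] by (simp add: subwords_eq_image)
qed

lemma take_drop_take: "q + n \<le> p \<Longrightarrow> take n (drop q (take p u)) = take n (drop q u)"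
  by (simp add: take_drop min_def)

definition repeats :: "nat \<Rightarrow> 'b list \<Rightarrow> nat set" where
  "repeats n u = {i. i + n \<le> length u \<and> (\<exists>j<i. take n (drop j u) = take n (drop i u))}"

definition separated :: "nat \<Rightarrow> nat set \<Rightarrow> bool" where
  "separated n T \<longleftrightarrow> (\<forall>p\<in>T. \<forall>q\<in>T. p < q \<longrightarrow> p + n \<le> q)"

lemma repeats_subset: "repeats n u \<subseteq> {..length u - n}"
  by (auto simp: repeats_def)

text \<open>Every window position either shows a new subword or is a repetition.\<close>

lemma card_subwords_repeats:
  assumes "n \<le> length u"
  shows "length u - n + 1 \<le> card (subwords n u) + card (repeats n u)"
proof -
  define Pos where "Pos = {..length u - n}"
  define N where "N = Pos - repeats n u"
  have Pos: "{i. i + n \<le> length u} = Pos"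
    using assms by (auto simp: Pos_def)
  have "inj_on (\<lambda>i. take n (drop i u)) N"
  proof (rule inj_onI)
    fix i i' assume "i \<in> N" "i' \<in> N" "take n (drop i u) = take n (drop i' u)"
    then show "i = i'"
      by (cases i i' rule: linorder_cases) (auto simp: N_def Pos_def repeats_def)
  qed
  then have "card N \<le> card (subwords n u)"
    unfolding subwords_eq_image Pos
    by (metis N_def Diff_subset card_image card_mono finite_atMost finite_imageI image_mono Pos_def)
  moreover have "card N = card Pos - card (repeats n u)"
    unfolding N_def Pos_def
    using repeats_subset by (subst card_Diff_subset) (auto intro: finite_subset[OF repeats_subset])
  ultimately show ?thesis
    by (simp add: Pos_def)
qed

text \<open>Greedy choice: keep the least element and discard the next \<open>n - 1\<close> positions.\<close>

lemma exists_separated_subset: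
  assumes "finite R" "1 \<le> n"
  shows "\<exists>T\<subseteq>R. separated n T \<and> card R \<le> n * card T"
  using assms(1)
proof (induction "card R" arbitrary: R rule: less_induct)
  case less
  show ?case
  proof (cases "R = {}")
    case True
    then show ?thesis by (auto simp: separated_def)
  next
    case False
    define p where "p = Min R"
    define R' where "R' = {r\<in>R. p + n \<le> r}"
    have p: "p \<in> R" "\<And>r. r \<in> R \<Longrightarrow> p \<le> r"
      using False less.prems by (simp_all add: p_def)
    have "p \<notin> R'"
      using assms(2) by (simp add: R'_def)
    then have "R' \<subset> R"
      using p(1) unfolding R'_def by blast
    then obtain T' where T': "T' \<subseteq> R'" "separated n T'" "card R' \<le> n * card T'"
      using less by (meson psubset_card_mono finite_subset less_le)
    have "finite T'" "p \<notin> T'"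
      using T'(1) \<open>R' \<subset> R\<close> less.prems assms(2) by (auto simp: R'_def intro: finite_subset)
    have "p + n \<le> q" if "q \<in> T'" for q
      using that T'(1) by (auto simp: R'_def)
    then have "separated n (insert p T')"
      using T'(2) by (fastforce simp: separated_def)
    moreover have "card R \<le> n * card (insert p T')"
    proof -
      have "R \<subseteq> R' \<union> {p..<p + n}"
        using p by (auto simp: R'_def)
      then have "card R \<le> card R' + n"
        using \<open>R' \<subset> R\<close> less.prems card_Un_le[of R' "{p..<p + n}"]
        by (metis card_atLeastLessThan add_diff_cancel_left' card_mono finite_Un finite_atLeastLessThan
            finite_subset order_trans psubset_imp_subset)
      then show ?thesis
        using T'(3) \<open>finite T'\<close> \<open>p \<notin> T'\<close> by simp
    qed
    ultimately show ?thesis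
      using T'(1) p(1) \<open>R' \<subset> R\<close> by blast
  qed
qed

text \<open>A block \<open>b\<close> that repeats, inside \<open>v @ b\<close>, a window starting in \<open>v\<close> is determined by \<open>v\<close>:
  it is periodic with period \<open>length v - j\<close> and its first period lies in \<open>v\<close>.\<close>

lemma repeated_block_unique:
  assumes "j < length v" "length b = n" "length b' = n"
    and "b = take n (drop j (v @ b))" "b' = take n (drop j (v @ b'))"
  shows "b = b'"
proof -
  have "b ! i = b' ! i" if "i < n" for i
    using that
  proof (induction i rule: less_induct)
    case (less i)
    have "b ! i = (v @ b) ! (j + i)" "b' ! i = (v @ b') ! (j + i)"
      using assms less.prems by (metis nth_take nth_drop le_add1 length_append order.strict_implies_order
          less_le_trans)+
    then show ?case
      using less assms(1) by (cases "j + i < length v") (auto simp: nth_append)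
  qed
  then show ?thesis
    using assms(2,3) by (simp add: list_eq_iff_nth_eq)
qed

lemma inj_on_prefix_suffix_of_repeated_block:
  assumes "j < p"
  shows "inj_on (\<lambda>u. (take p u, drop (p + n) u))
    {u. p + n \<le> length u \<and> take n (drop p u) = take n (drop j u)}"
proof (rule inj_onI)
  fix u u'
  assume u: "u \<in> {u. p + n \<le> length u \<and> take n (drop p u) = take n (drop j u)}"
    and u': "u' \<in> {u. p + n \<le> length u \<and> take n (drop p u) = take n (drop j u)}"
    and eq: "(take p u, drop (p + n) u) = (take p u', drop (p + n) u')"
  have block: "take n (drop p w) = take n (drop j (take p w @ take n (drop p w)))"
    if "take n (drop p w) = take n (drop j w)" for w
  proof -
    have "take n (drop j (take (p + n) w)) = take n (drop j w)"
      using assms by (simp add: take_drop_take)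
    moreover have "take p w @ take n (drop p w) = take (p + n) w"
      by (simp add: take_add)
    ultimately show ?thesis
      using that by (simp only:)
  qed
  have prefix: "take p u = take p u'"
    using eq by simp
  have "take n (drop p u) = take n (drop p u')"
  proof (rule repeated_block_unique[where v = "take p u" and j = j])
    show "take n (drop p u) = take n (drop j (take p u @ take n (drop p u)))"
      using block u by blast
    show "take n (drop p u') = take n (drop j (take p u @ take n (drop p u')))"
      unfolding prefix using block u' by blast
    show "j < length (take p u)" "length (take n (drop p u)) = n" "length (take n (drop p u')) = n"
      using assms u u' by auto
  qed
  moreover have "u = take p u @ take n (drop p u) @ drop (p + n) u"
    "u' = take p u' @ take n (drop p u') @ drop (p + n) u'"
    by (metis append_take_drop_id drop_drop add.commute)+
  ultimately show "u = u'"
    using eq by (metis prod.inject)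
qed

lemma repeats_choice:
  assumes "T \<subseteq> repeats n u"
  obtains J where "J \<in> PiE T (\<lambda>p. {..<p})" "\<forall>p\<in>T. take n (drop p u) = take n (drop (J p) u)"
proof -
  have "\<forall>p\<in>T. \<exists>j<p. take n (drop j u) = take n (drop p u)"
    using assms by (auto simp: repeats_def)
  then obtain J where "\<forall>p\<in>T. J p < p \<and> take n (drop (J p) u) = take n (drop p u)"
    by metis
  then show ?thesis
    using that[of "restrict J T"] by auto
qed

lemma power_card_subwords_le:
  fixes \<alpha> :: real
  assumes "0 < \<alpha>" "\<alpha> \<le> 1" "1 \<le> n" "n \<le> length u"
  shows "\<alpha> ^ card (subwords n u) \<le> \<alpha> ^ (length u - n + 1) *
    (\<Sum>T\<in>{T\<in>Pow {..length u - n}. separated n T \<and> T \<subseteq> repeats n u}. (1 / \<alpha> ^ n) ^ card T)"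
proof -
  define l where "l = length u - n + 1"
  define r where "r = card (repeats n u)"
  have fin: "finite (repeats n u)"
    using repeats_subset finite_subset by blast
  have "r \<le> l"
    using card_mono[OF finite_atMost repeats_subset[of n u]] by (simp add: r_def l_def)
  obtain T where T: "T \<subseteq> repeats n u" "separated n T" "r \<le> n * card T"
    using exists_separated_subset[OF fin assms(3)] r_def by blast
  have "\<alpha> ^ card (subwords n u) \<le> \<alpha> ^ (l - r)"
    using card_subwords_repeats[OF assms(4)] assms(1,2)
    by (intro power_decreasing) (auto simp: l_def r_def)
  also have "\<dots> = \<alpha> ^ l / \<alpha> ^ r"
    using \<open>r \<le> l\<close> assms(1) by (simp add: power_diff)
  also have "\<dots> \<le> \<alpha> ^ l / \<alpha> ^ (n * card T)"
    using T(3) assms(1,2) by (intro divide_left_mono power_decreasing) auto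
  also have "\<dots> = \<alpha> ^ l * (1 / \<alpha> ^ n) ^ card T"
    by (simp add: power_mult power_one_over)
  also have "\<dots> \<le> \<alpha> ^ l * (\<Sum>T\<in>{T\<in>Pow {..length u - n}. separated n T \<and> T \<subseteq> repeats n u}. (1 / \<alpha> ^ n) ^ card T)"
    using T repeats_subset[of n u] assms(1)
    by (intro mult_left_mono member_le_sum) auto
  finally show ?thesis
    by (simp add: l_def)
qed

lemma sum_Pow_power_card:
  "finite A \<Longrightarrow> (\<Sum>T\<in>Pow A. x ^ card T) = (1 + x :: 'a :: comm_semiring_1) ^ card A"
  using prod_add[of A "\<lambda>_. x" "\<lambda>_. 1"] by (simp add: add.commute)

lemma expectation_avoids_random_subset:
  fixes \<alpha> :: real
  assumes "finite A" "W \<subseteq> A" "0 \<le> \<alpha>" "\<alpha> \<le> 1"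
  shows "measure_pmf.expectation (Pi_pmf A False (\<lambda>_. bernoulli_pmf (1 - \<alpha>)))
           (\<lambda>b. if W \<inter> {w\<in>A. b w} = {} then 1 else 0) = \<alpha> ^ card W"
proof -
  define g :: "_ \<Rightarrow> bool \<Rightarrow> real" where "g = (\<lambda>w v. if w \<in> W \<and> v then 0 else 1)"
  have "(if W \<inter> {w\<in>A. b w} = {} then 1 else 0) = (\<Prod>w\<in>A. g w (b w))" for b
    using assms(1,2) by (auto simp: g_def prod_zero_iff intro!: prod.neutral)
  then have "measure_pmf.expectation (Pi_pmf A False (\<lambda>_. bernoulli_pmf (1 - \<alpha>)))
      (\<lambda>b. if W \<inter> {w\<in>A. b w} = {} then 1 else 0)
      = (\<Prod>w\<in>A. measure_pmf.expectation (bernoulli_pmf (1 - \<alpha>)) (g w))"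
    using assms(1)
    by (simp only:, intro expectation_prod_Pi_pmf) (auto simp: g_def intro!: integrable_measure_pmf_finite)
  also have "\<dots> = (\<Prod>w\<in>A. if w \<in> W then \<alpha> else 1)"
    using assms(3,4) by (intro prod.cong) (auto simp: g_def)
  also have "\<dots> = \<alpha> ^ card W"
    using assms(1,2) by (simp add: prod.If_cases Int_absorb1 Int_commute)
  finally show ?thesis .
qed

lemma almost_additive_multiple:
  fixes c :: "nat \<Rightarrow> real"
  assumes "\<And>m n. 1 \<le> m \<Longrightarrow> 1 \<le> n \<Longrightarrow> \<bar>c (m + n) - c m - c n\<bar> \<le> C" "1 \<le> m" "1 \<le> n"
  shows "\<bar>c (m * n) / real (m * n) - c n / real n\<bar> \<le> C / real n"
proof -
  have "0 \<le> C"
    using assms(1)[of 1 1] by simp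
  have multiple: "\<bar>c (Suc q * n) - real (Suc q) * c n\<bar> \<le> real q * C" for q
  proof (induction q)
    case (Suc q)
    have "\<bar>c (Suc q * n + n) - c (Suc q * n) - c n\<bar> \<le> C"
      using assms by simp
    then show ?case
      using Suc by (simp add: algebra_simps)
  qed simp
  obtain q where q: "m = Suc q"
    using assms(2) Suc_le_D[of 0 m] by auto
  have "\<bar>c (m * n) - real m * c n\<bar> \<le> real m * C"
    using multiple[of q] q \<open>0 \<le> C\<close> by (simp add: algebra_simps)
  then have "\<bar>c (m * n) - real m * c n\<bar> / real (m * n) \<le> real m * C / real (m * n)"
    by (rule divide_right_mono) simp
  moreover have "c (m * n) / real (m * n) - c n / real n = (c (m * n) - real m * c n) / real (m * n)"
    using assms(2,3) by (simp add: field_simps)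
  ultimately show ?thesis
    using assms(2,3) by simp
qed

lemma almost_additive_convergent:
  fixes c :: "nat \<Rightarrow> real"
  assumes "\<And>m n. 1 \<le> m \<Longrightarrow> 1 \<le> n \<Longrightarrow> \<bar>c (m + n) - c m - c n\<bar> \<le> C"
  shows "convergent (\<lambda>n. c n / real n)"
proof -
  have "0 \<le> C"
    using assms[of 1 1] by simp
  have "Cauchy (\<lambda>n. c n / real n)"
  proof (rule CauchyI)
    fix e :: real assume "0 < e"
    obtain N :: nat where N: "2 * C / e < real N"
      using reals_Archimedean2 by blast
    have "\<bar>c m / real m - c n / real n\<bar> < e" if "N + 1 \<le> m" "N + 1 \<le> n" for m n
    proof -
      have "C / real m \<le> C / real (N + 1)" "C / real n \<le> C / real (N + 1)"
        using that \<open>0 \<le> C\<close> by (intro divide_left_mono; simp)+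
      moreover have "2 * C / real (N + 1) < e"
        using N \<open>0 < e\<close> by (simp add: field_simps)
      moreover have "\<bar>c m / real m - c n / real n\<bar> \<le> C / real n + C / real m"
        using almost_additive_multiple[OF assms, of m n] almost_additive_multiple[OF assms, of n m] that
        by (simp add: mult.commute)
      ultimately show ?thesis
        by linarith
    qed
    then show "\<exists>M. \<forall>m\<ge>M. \<forall>n\<ge>M. norm (c m / real m - c n / real n) < e"
      by auto
  qed
  then show ?thesis
    by (rule Cauchy_convergent)
qed

lemma small_steps_visit_interval:
  fixes V :: "nat \<Rightarrow> real"
  assumes "b \<le> V 0" "V N \<le> a" "\<forall>j<N. \<bar>V (Suc j) - V j\<bar> \<le> D" "D < b - a" "0 \<le> D"
  shows "\<exists>j\<le>N. a < V j \<and> V j < b"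
  using assms
proof (induction N arbitrary: V)
  case (Suc N)
  show ?case
  proof (cases "V 1 < b")
    case True
    have "\<bar>V 1 - V 0\<bar> \<le> D"
      using Suc.prems(3) by auto
    then show ?thesis
      using True Suc.prems(1,4) by (intro exI[of _ 1]) auto
  next
    case False
    then obtain j where "j \<le> N" "a < V (Suc j)" "V (Suc j) < b"
      using Suc.IH[of "V \<circ> Suc"] Suc.prems by auto
    then show ?thesis
      by (intro exI[of _ "Suc j"]) auto
  qed
qed simp

lemma exists_above_below_weighted_average:
  fixes p v :: "'b \<Rightarrow> real"
  assumes "finite S" "S \<noteq> {}" "\<forall>s\<in>S. 0 < p s" "(\<Sum>s\<in>S. p s) = 1"
  shows "\<exists>s\<in>S. (\<Sum>s\<in>S. p s * v s) \<le> v s" and "\<exists>s\<in>S. v s \<le> (\<Sum>s\<in>S. p s * v s)"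
proof -
  let ?A = "\<Sum>s\<in>S. p s * v s"
  have avg: "(\<Sum>s\<in>S. p s * ?A) = ?A"
    using assms(4) by (simp add: sum_distrib_right[symmetric])
  show "\<exists>s\<in>S. ?A \<le> v s"
  proof (rule ccontr)
    assume "\<not> ?thesis"
    then have "?A < (\<Sum>s\<in>S. p s * ?A)"
      using assms(1-3) by (intro sum_strict_mono) auto
    then show False
      using avg by simp
  qed
  show "\<exists>s\<in>S. v s \<le> ?A"
  proof (rule ccontr)
    assume "\<not> ?thesis"
    then have "(\<Sum>s\<in>S. p s * ?A) < ?A"
      using assms(1-3) by (intro sum_strict_mono) auto
    then show False
      using avg by simp
  qed
qed

lemma tendsto_inverse_of_ge:
  fixes k :: "nat \<Rightarrow> nat"
  assumes "\<forall>n. n \<le> k n"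
  shows "(\<lambda>n. 1 / real (k n)) \<longlonglongrightarrow> 0"
proof (rule tendsto_sandwich[OF _ _ tendsto_const lim_1_over_n])
  show "\<forall>\<^sub>F n in sequentially. 1 / real (k n) \<le> 1 / real n"
    using eventually_ge_at_top[of 1]
  proof eventually_elim
    case (elim n)
    then show ?case
      using assms[rule_format, of n] by (intro divide_left_mono) auto
  qed
qed simp

lemma tendsto_windows_ratio:
  fixes k :: "nat \<Rightarrow> nat"
  assumes "\<forall>n. n \<le> k n" "(\<lambda>n. real n / real (k n)) \<longlonglongrightarrow> 0"
  shows "(\<lambda>n. real (k n - n + 1) / real (k n)) \<longlonglongrightarrow> 1"
proof -
  have "(\<lambda>n. 1 - real n / real (k n) + 1 / real (k n)) \<longlonglongrightarrow> 1 - 0 + 0"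
    by (intro tendsto_intros assms(2) tendsto_inverse_of_ge assms(1))
  moreover have "\<forall>\<^sub>F n in sequentially. 1 - real n / real (k n) + 1 / real (k n) = real (k n - n + 1) / real (k n)"
    using eventually_ge_at_top[of 1]
  proof eventually_elim
    case (elim n)
    then have "0 < real (k n)" "n \<le> k n"
      using assms(1)[rule_format, of n] by auto
    then show ?case
      by (simp add: field_simps)
  qed
  ultimately show ?thesis
    by (simp add: tendsto_cong)
qed

lemma tendsto_ln_exponential_div:
  fixes k :: "nat \<Rightarrow> nat"
  assumes "0 < C" "0 < D" "0 < \<alpha>" "\<forall>n. n \<le> k n" "(\<lambda>n. real n / real (k n)) \<longlonglongrightarrow> 0"
  shows "(\<lambda>n. ln (C * D ^ n * \<alpha> ^ (k n - n + 1) * exp (P * real (k n))) / real (k n)) \<longlonglongrightarrow> P + ln \<alpha>"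
proof -
  have "(\<lambda>n. ln C * (1 / real (k n)) + ln D * (real n / real (k n))
      + real (k n - n + 1) / real (k n) * ln \<alpha> + P) \<longlonglongrightarrow> ln C * 0 + ln D * 0 + 1 * ln \<alpha> + P"
    by (intro tendsto_intros tendsto_inverse_of_ge tendsto_windows_ratio assms(4,5))
  moreover have "\<forall>\<^sub>F n in sequentially. ln C * (1 / real (k n)) + ln D * (real n / real (k n))
      + real (k n - n + 1) / real (k n) * ln \<alpha> + P
      = ln (C * D ^ n * \<alpha> ^ (k n - n + 1) * exp (P * real (k n))) / real (k n)"
    using eventually_ge_at_top[of 1]
  proof eventually_elim
    case (elim n)
    then have "0 < real (k n)"
      using assms(4)[rule_format, of n] by auto
    then show ?case
      using assms(1-3) by (simp add: ln_mult ln_realpow field_simps)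
  qed
  ultimately show ?thesis
    by (simp add: tendsto_cong add.commute)
qed

lemma tendsto_ln_exponential_div_upper:
  fixes k :: "nat \<Rightarrow> nat"
  assumes "0 < C" "0 < \<alpha>" "0 < \<rho>" "\<rho> < 1" "0 \<le> B" "\<forall>n. n \<le> k n"
    and "(\<lambda>n. real n / real (k n)) \<longlonglongrightarrow> 0" "\<forall>\<^sub>F n in sequentially. real (k n) \<le> real n ^ 2"
  shows "(\<lambda>n. ln (C * exp (P * real (k n)) * (\<alpha> ^ (k n - n + 1) * (1 + real (k n) * B * \<rho> ^ n) ^ (k n - n + 1)))
    / real (k n)) \<longlonglongrightarrow> P + ln \<alpha>"
proof -
  define q where "q = (\<lambda>n. 1 + real (k n) * B * \<rho> ^ n)"
  have "(\<lambda>n. real (k n) * \<rho> ^ n) \<longlonglongrightarrow> 0"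
  proof (rule tendsto_sandwich[where f = "\<lambda>_. 0" and h = "\<lambda>n. real n ^ 2 * \<rho> ^ n"])
    show "\<forall>\<^sub>F n in sequentially. real (k n) * \<rho> ^ n \<le> real n ^ 2 * \<rho> ^ n"
      using assms(8) by eventually_elim (use assms(3) in simp)
    show "(\<lambda>n. real n ^ 2 * \<rho> ^ n) \<longlonglongrightarrow> 0"
      using assms(3,4) by real_asymp
  qed (use assms(3) in auto)
  then have "(\<lambda>n. 1 + B * (real (k n) * \<rho> ^ n)) \<longlonglongrightarrow> 1 + B * 0"
    by (intro tendsto_add tendsto_mult tendsto_const)
  then have "q \<longlonglongrightarrow> 1"
    by (simp add: q_def mult_ac)
  then have ln_q: "(\<lambda>n. ln (q n)) \<longlonglongrightarrow> 0"
    using tendsto_ln[of q 1] by simp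
  have "(\<lambda>n. ln C * (1 / real (k n)) + P + real (k n - n + 1) / real (k n) * (ln \<alpha> + ln (q n)))
      \<longlonglongrightarrow> ln C * 0 + P + 1 * (ln \<alpha> + 0)"
    by (intro tendsto_intros tendsto_inverse_of_ge tendsto_windows_ratio assms(6,7) ln_q)
  moreover have "\<forall>\<^sub>F n in sequentially. ln C * (1 / real (k n)) + P + real (k n - n + 1) / real (k n) * (ln \<alpha> + ln (q n))
      = ln (C * exp (P * real (k n)) * (\<alpha> ^ (k n - n + 1) * q n ^ (k n - n + 1))) / real (k n)"
    using eventually_ge_at_top[of 1]
  proof eventually_elim
    case (elim n)
    have "0 < q n" "0 < real (k n)"
      using assms(3,5) elim assms(6)[rule_format, of n] by (auto simp: q_def add_pos_nonneg)
    then show ?case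
      using assms(1,2) by (simp add: ln_mult ln_realpow field_simps)
  qed
  ultimately show ?thesis
    by (simp add: tendsto_cong q_def)
qed

lemma tendsto_ln_div_squeeze:
  fixes e l u :: "nat \<Rightarrow> real" and k :: "nat \<Rightarrow> nat"
  assumes "\<forall>\<^sub>F n in sequentially. 0 < l n \<and> l n \<le> e n \<and> e n \<le> u n"
    and "(\<lambda>n. ln (l n) / real (k n)) \<longlonglongrightarrow> L" "(\<lambda>n. ln (u n) / real (k n)) \<longlonglongrightarrow> L"
  shows "(\<lambda>n. ln (e n) / real (k n)) \<longlonglongrightarrow> L"
proof (rule tendsto_sandwich[OF _ _ assms(2,3)])
  show "\<forall>\<^sub>F n in sequentially. ln (l n) / real (k n) \<le> ln (e n) / real (k n)"
    using assms(1) by (rule eventually_mono) (auto intro: divide_right_mono)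
  show "\<forall>\<^sub>F n in sequentially. ln (e n) / real (k n) \<le> ln (u n) / real (k n)"
    using assms(1) by (rule eventually_mono) (auto intro: divide_right_mono)
qed

lemma eventually_le_square_of_smallo:
  fixes k :: "nat \<Rightarrow> nat"
  assumes "(\<lambda>n. real (k n)) \<in> o(\<lambda>n. real n ^ 2 / ln (real n))"
  shows "\<forall>\<^sub>F n in sequentially. real (k n) \<le> real n ^ 2"
proof -
  have "\<forall>\<^sub>F n in sequentially. real (k n) \<le> 1 * \<bar>real n ^ 2 / ln (real n)\<bar>"
    using landau_o.smallD[OF assms, of 1] by simp
  moreover have "\<forall>\<^sub>F n in sequentially. \<bar>real n ^ 2 / ln (real n)\<bar> \<le> real n ^ 2"
    by real_asymp
  ultimately show ?thesis
    by eventually_elim linarith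
qed

section \<open>Gibbs measures\<close>

locale gibbs_measure =
  fixes X :: "(int \<Rightarrow> 'a::finite) set" and f :: "(int \<Rightarrow> 'a) \<Rightarrow> real"
    and M :: "(int \<Rightarrow> 'a) measure" and P K :: real
  assumes SFT: "is_SFT X"
    and inv_prob: "inv_prob_on X M"
    and K_gt_1: "1 < K"
    and gibbs: "\<forall>m\<ge>1. \<forall>x\<in>X.
        1 / K \<le> mu M X (word_at x 0 m) / exp (- P * real m + birkhoff f m x) \<and>
        mu M X (word_at x 0 m) / exp (- P * real m + birkhoff f m x) \<le> K"
    and quasi_mult: "\<And>u v. u @ v \<in> lang X \<Longrightarrow> mu M X (u @ v) \<le> K * mu M X u * mu M X v"
begin

abbreviation \<mu> :: "'a list \<Rightarrow> real" where "\<mu> \<equiv> mu M X"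

lemma prob_space_M: "prob_space M"
  and sets_M: "sets M = sets shift_space"
  and X_in_sets: "X \<in> sets M"
  and measure_X: "measure M X = 1"
  and measure_preserving: "\<And>A. A \<in> sets M \<Longrightarrow> shift -` A \<in> sets M \<and> measure M (shift -` A) = measure M A"
  using inv_prob by (auto simp: inv_prob_on_def)

lemma cyl_in_sets: "cyl X w \<in> sets M"
proof -
  have "cyl X w = X \<inter> {x. word_at x 0 (length w) = w}"
    by (auto simp: cyl_def)
  then show ?thesis
    using X_in_sets cylinder_in_shift_space[of w] sets_M by auto
qed

lemma mu_nonneg: "0 \<le> \<mu> w"
  by (simp add: mu_def)

lemma mu_Nil: "\<mu> [] = 1"
  using measure_X by (simp add: mu_def cyl_def word_at_def)

lemma X_nonempty: "X \<noteq> {}"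
  using measure_X by auto

lemma Bn_nonempty: "Bn X m \<noteq> {}"
  using X_nonempty by (simp add: Bn_def)

lemma sum_mu_eq_measure:
  assumes "S \<subseteq> Bn X m"
  shows "(\<Sum>w\<in>S. \<mu> w) = measure M (\<Union>w\<in>S. cyl X w)"
proof -
  have "cyl X a \<inter> cyl X b = {}" if "a \<in> S" "b \<in> S" "a \<noteq> b" for a b
    using that length_Bn[OF subsetD[OF assms]] by (auto simp: cyl_def)
  then have "disjoint_family_on (cyl X) S"
    by (simp add: disjoint_family_on_def)
  then show ?thesis
    unfolding mu_def using finite_subset[OF assms finite_Bn] cyl_in_sets
    by (intro finite_measure.finite_measure_finite_Union[symmetric]
        prob_space.finite_measure[OF prob_space_M]) auto
qed

lemma sum_mu_Bn: "(\<Sum>w\<in>Bn X m. \<mu> w) = 1"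
proof -
  have "(\<Union>w\<in>Bn X m. cyl X w) = X"
    by (auto simp: cyl_def Bn_def)
  then show ?thesis
    using sum_mu_eq_measure[of "Bn X m" m] measure_X by simp
qed

lemma sum_mu_le_1: "S \<subseteq> Bn X m \<Longrightarrow> (\<Sum>w\<in>S. \<mu> w) \<le> 1"
  using sum_mono2[OF finite_Bn, of S X m \<mu>] mu_nonneg sum_mu_Bn by simp

lemma mu_le_gibbs: "1 \<le> m \<Longrightarrow> x \<in> X \<Longrightarrow> \<mu> (word_at x 0 m) \<le> K * exp (- P * real m + birkhoff f m x)"
  using gibbs by (simp add: pos_divide_le_eq)

lemma gibbs_le_mu:
  assumes "1 \<le> m" "x \<in> X"
  shows "exp (- P * real m + birkhoff f m x) \<le> K * \<mu> (word_at x 0 m)"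
proof -
  have "1 / K * exp (- P * real m + birkhoff f m x) \<le> \<mu> (word_at x 0 m)"
    using gibbs assms by (simp add: pos_le_divide_eq)
  then show ?thesis
    using K_gt_1 by (simp add: field_simps)
qed

lemma mu_pos: "w \<in> Bn X m \<Longrightarrow> 0 < \<mu> w"
proof (cases "m = 0")
  case True
  then show "w \<in> Bn X m \<Longrightarrow> 0 < \<mu> w"
    using length_Bn mu_Nil by fastforce
next
  case False
  assume "w \<in> Bn X m"
  then obtain x where "x \<in> X" "w = word_at x 0 m"
    by (auto simp: Bn_def)
  then have "0 < K * \<mu> w"
    using gibbs_le_mu[of m x] False by (metis exp_gt_zero less_one not_le order_less_le_trans)
  then show ?thesis
    using K_gt_1 by (simp add: zero_less_mult_iff)
qed

lemma pos_of_mu_le_power: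
  assumes "\<forall>u\<in>lang X. n0 \<le> length u \<longrightarrow> \<mu> u \<le> \<gamma> ^ length u"
  shows "0 < \<gamma>"
proof (rule ccontr)
  assume "\<not> 0 < \<gamma>"
  obtain u where u: "u \<in> Bn X (2 * n0 + 1)"
    using Bn_nonempty by blast
  then have "0 < \<gamma> ^ (2 * n0 + 1)"
    using assms mu_pos[OF u] length_Bn[OF u] Bn_subset_lang by fastforce
  moreover have "\<gamma> ^ (2 * n0 + 1) \<le> 0"
    using \<open>\<not> 0 < \<gamma>\<close> by (simp add: power_add power_mult mult_nonpos_nonneg)
  ultimately show False
    by simp
qed

lemma birkhoff_le_on_cyl:
  assumes "w \<in> Bn X m" "1 \<le> m" "x \<in> cyl X w"
  shows "birkhoff f m x \<le> ln (K * exp (P * real m) * \<mu> w)"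
proof -
  have x: "x \<in> X" "word_at x 0 m = w"
    using assms length_Bn[OF assms(1)] by (auto simp: cyl_def)
  then have "exp (- P * real m + birkhoff f m x) * exp (P * real m) \<le> K * \<mu> w * exp (P * real m)"
    using gibbs_le_mu[OF assms(2) x(1)] by simp
  then have "exp (birkhoff f m x) \<le> K * exp (P * real m) * \<mu> w"
    by (simp add: mult_exp_exp mult_ac)
  then show ?thesis
    using K_gt_1 mu_pos[OF assms(1)] by (simp add: ln_ge_iff)
qed

lemma exp_Smf_le:
  assumes "w \<in> Bn X m" "1 \<le> m"
  shows "exp (Smf X f w) \<le> K * exp (P * real m) * \<mu> w"
proof -
  have "cyl X w \<noteq> {}"
    using assms(1) length_Bn[OF assms(1)] by (auto simp: Bn_def cyl_def)
  then have "Smf X f w \<le> ln (K * exp (P * real m) * \<mu> w)"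
    unfolding Smf_def length_Bn[OF assms(1)] using birkhoff_le_on_cyl[OF assms]
    by (intro cSup_least) auto
  then show ?thesis
    using K_gt_1 mu_pos[OF assms(1)] by (simp add: ln_ge_iff)
qed

lemma exp_Smf_ge:
  assumes "w \<in> Bn X m"
  shows "exp (P * real m) * \<mu> w \<le> K * exp (Smf X f w)"
proof (cases "m = 0")
  case True
  then have "w = []" "birkhoff f 0 ` cyl X [] = {0}"
    using assms length_Bn X_nonempty by (auto simp: birkhoff_def cyl_def word_at_def)
  then show ?thesis
    using True mu_Nil K_gt_1 by (simp add: Smf_def)
next
  case False
  obtain x where x: "x \<in> X" "w = word_at x 0 m"
    using assms by (auto simp: Bn_def)
  then have "birkhoff f m x \<le> Smf X f w"
    unfolding Smf_def using birkhoff_le_on_cyl[OF assms] False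
    by (intro cSup_upper bdd_aboveI2) (auto simp: cyl_def)
  then have "K * exp (- P * real m + birkhoff f m x) \<le> K * exp (- P * real m + Smf X f w)"
    using K_gt_1 by simp
  then have "\<mu> w \<le> K * exp (- P * real m + Smf X f w)"
    using mu_le_gibbs[of m x] x False by simp
  then have "exp (P * real m) * \<mu> w \<le> exp (P * real m) * (K * exp (- P * real m + Smf X f w))"
    by simp
  then show ?thesis
    by (simp add: mult_exp_exp mult_ac)
qed

section \<open>Bounds on the expectation\<close>

lemma G_set_subset_Bn: "G_set M X \<delta> n k \<subseteq> Bn X k"
  by (auto simp: G_set_def)

lemma E_set_subset_Bn: "E_set M X \<delta> n \<subseteq> Bn X n"
  by (auto simp: E_set_def)

lemma expected_psi_eq:
  assumes "0 \<le> \<alpha>" "\<alpha> \<le> 1"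
  shows "expected_psi M X f \<delta> \<alpha> n k = 1 / real (card (E_set M X \<delta> n)) *
     (\<Sum>u\<in>G_set M X \<delta> n k. exp (Smf X f u) * \<alpha> ^ card (subwords n u))"
proof -
  let ?p = "Pi_pmf (Bn X n) False (\<lambda>_. bernoulli_pmf (1 - \<alpha>))"
  have finite_G: "finite (G_set M X \<delta> n k)"
    using G_set_subset_Bn finite_Bn by (rule finite_subset)
  have integrable: "integrable ?p h" for h :: "_ \<Rightarrow> real"
    by (intro integrable_measure_pmf_finite) (simp add: set_Pi_pmf finite_Bn finite_PiE_dflt)
  have xi: "measure_pmf.expectation ?p (\<lambda>b. xi n {w \<in> Bn X n. b w} u) = \<alpha> ^ card (subwords n u)"
    if "u \<in> G_set M X \<delta> n k" for u
  proof -
    have "subwords n u \<subseteq> Bn X n"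
      using that G_set_subset_Bn subwords_subset_Bn[OF SFT] by blast
    then show ?thesis
      unfolding xi_def by (rule expectation_avoids_random_subset[OF finite_Bn _ assms])
  qed
  have "expected_psi M X f \<delta> \<alpha> n k = measure_pmf.expectation ?p
      (\<lambda>b. 1 / real (card (E_set M X \<delta> n)) *
        (\<Sum>u\<in>G_set M X \<delta> n k. exp (Smf X f u) * xi n {w \<in> Bn X n. b w} u))"
    by (simp add: expected_psi_def psi_def)
  also have "\<dots> = 1 / real (card (E_set M X \<delta> n)) *
      (\<Sum>u\<in>G_set M X \<delta> n k. exp (Smf X f u) * measure_pmf.expectation ?p (\<lambda>b. xi n {w \<in> Bn X n. b w} u))"
    using integrable finite_G by (simp add: Bochner_Integration.integral_sum)
  finally show ?thesis
    using xi by simp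
qed

lemma expected_psi_ge:
  assumes "0 < \<alpha>" "\<alpha> \<le> 1" "n \<le> k"
  shows "1 / real (card (E_set M X \<delta> n)) * (1 / K) * \<alpha> ^ (k - n + 1) * exp (P * real k) *
      measure M (\<Union>u\<in>G_set M X \<delta> n k. cyl X u) \<le> expected_psi M X f \<delta> \<alpha> n k"
proof -
  have "(1 / K) * \<alpha> ^ (k - n + 1) * exp (P * real k) * \<mu> u \<le> exp (Smf X f u) * \<alpha> ^ card (subwords n u)"
    if "u \<in> G_set M X \<delta> n k" for u
  proof -
    have u: "u \<in> Bn X k"
      using that G_set_subset_Bn by blast
    then have "\<alpha> ^ (k - n + 1) \<le> \<alpha> ^ card (subwords n u)"
      using card_subwords_le[of n u] length_Bn[OF u] assms by (intro power_decreasing) auto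
    moreover have "(1 / K) * exp (P * real k) * \<mu> u \<le> exp (Smf X f u)"
      using exp_Smf_ge[OF u] K_gt_1 by (simp add: field_simps)
    ultimately have "(1 / K) * exp (P * real k) * \<mu> u * \<alpha> ^ (k - n + 1)
        \<le> exp (Smf X f u) * \<alpha> ^ card (subwords n u)"
      using assms(1) by (intro mult_mono) auto
    then show ?thesis
      by (simp add: mult_ac)
  qed
  then have "(\<Sum>u\<in>G_set M X \<delta> n k. (1 / K) * \<alpha> ^ (k - n + 1) * exp (P * real k) * \<mu> u)
      \<le> (\<Sum>u\<in>G_set M X \<delta> n k. exp (Smf X f u) * \<alpha> ^ card (subwords n u))"
    by (rule sum_mono)
  then have "(1 / K) * \<alpha> ^ (k - n + 1) * exp (P * real k) * measure M (\<Union>u\<in>G_set M X \<delta> n k. cyl X u)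
      \<le> (\<Sum>u\<in>G_set M X \<delta> n k. exp (Smf X f u) * \<alpha> ^ card (subwords n u))"
    by (simp only: sum_mu_eq_measure[OF G_set_subset_Bn, symmetric] sum_distrib_left)
  then have "1 / real (card (E_set M X \<delta> n)) *
      ((1 / K) * \<alpha> ^ (k - n + 1) * exp (P * real k) * measure M (\<Union>u\<in>G_set M X \<delta> n k. cyl X u))
      \<le> 1 / real (card (E_set M X \<delta> n)) *
      (\<Sum>u\<in>G_set M X \<delta> n k. exp (Smf X f u) * \<alpha> ^ card (subwords n u))"
    by (rule mult_left_mono) simp
  then show ?thesis
    unfolding expected_psi_eq[OF less_imp_le[OF assms(1)] assms(2)] by (simp only: mult.assoc)
qed

lemma mu_append3_le:
  assumes "v @ b @ w \<in> lang X"
  shows "\<mu> (v @ b @ w) \<le> K^2 * \<mu> v * \<mu> b * \<mu> w"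
proof -
  obtain L where L: "v @ b @ w \<in> Bn X L"
    using assms by (auto simp: lang_def)
  then have "v @ b \<in> lang X"
    using take_drop_Bn[OF SFT L, of 0 "length (v @ b)"] length_Bn[OF L] Bn_subset_lang by auto
  have "\<mu> ((v @ b) @ w) \<le> K * \<mu> (v @ b) * \<mu> w"
    using quasi_mult[of "v @ b" w] assms by simp
  also have "\<dots> \<le> K * (K * \<mu> v * \<mu> b) * \<mu> w"
    using quasi_mult[OF \<open>v @ b \<in> lang X\<close>] K_gt_1 mu_nonneg
    by (intro mult_right_mono mult_left_mono) auto
  finally show ?thesis
    by (simp add: power2_eq_square mult_ac)
qed

text \<open>If the block at \<open>p\<close> copies an earlier window, then it is determined by the prefix of
  length \<open>p\<close>; only the prefix and the suffix are free, and the block costs at most \<open>\<gamma>^n\<close>.\<close>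

lemma sum_mu_forced_block_le:
  assumes "\<forall>b\<in>Bn X n. \<mu> b \<le> \<gamma> ^ n" "0 \<le> \<gamma>" "j < p" "p + n \<le> L"
  shows "(\<Sum>u\<in>{u\<in>Bn X L. Q (take p u) \<and> take n (drop p u) = take n (drop j u)}. \<mu> u)
    \<le> K^2 * \<gamma>^n * (\<Sum>v\<in>{v\<in>Bn X p. Q v}. \<mu> v)"
proof -
  define S where "S = {u\<in>Bn X L. Q (take p u) \<and> take n (drop p u) = take n (drop j u)}"
  define V where "V = {v\<in>Bn X p. Q v}"
  define W where "W = Bn X (L - (p + n))"
  define \<phi> where "\<phi> = (\<lambda>u :: 'a list. (take p u, drop (p + n) u))"
  have finite: "finite V" "finite W"
    unfolding V_def W_def by (auto intro: finite_subset[OF _ finite_Bn])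
  have parts: "take p u \<in> V" "take n (drop p u) \<in> Bn X n" "drop (p + n) u \<in> W" if "u \<in> S" for u
  proof -
    have u: "u \<in> Bn X L"
      using that by (simp add: S_def)
    then show "take p u \<in> V" "take n (drop p u) \<in> Bn X n"
      using that assms(4) take_drop_Bn[OF SFT u, of 0 p] take_drop_Bn[OF SFT u, of p n]
      by (auto simp: S_def V_def)
    show "drop (p + n) u \<in> W"
      using drop_Bn[OF SFT, of u "p + n" "L - (p + n)"] u assms(4) by (simp add: W_def)
  qed
  have "S \<subseteq> {u. p + n \<le> length u \<and> take n (drop p u) = take n (drop j u)}"
    using assms(4) length_Bn by (auto simp: S_def)
  then have "inj_on \<phi> S"
    unfolding \<phi>_def by (rule inj_on_subset[OF inj_on_prefix_suffix_of_repeated_block[OF assms(3)]])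
  have "(\<Sum>u\<in>S. \<mu> u) \<le> (\<Sum>u\<in>S. K^2 * \<gamma>^n * (\<mu> (take p u) * \<mu> (drop (p + n) u)))"
  proof (rule sum_mono)
    fix u assume u: "u \<in> S"
    have "u = take p u @ take n (drop p u) @ drop (p + n) u"
      by (metis append_take_drop_id drop_drop add.commute)
    then have "\<mu> u \<le> K^2 * \<mu> (take p u) * \<mu> (take n (drop p u)) * \<mu> (drop (p + n) u)"
      using mu_append3_le[of "take p u" "take n (drop p u)" "drop (p + n) u"] u Bn_subset_lang
      by (force simp: S_def)
    also have "\<dots> \<le> K^2 * \<mu> (take p u) * \<gamma>^n * \<mu> (drop (p + n) u)"
      using assms(1) parts(2)[OF u] mu_nonneg by (intro mult_right_mono mult_left_mono) auto
    finally show "\<mu> u \<le> K^2 * \<gamma>^n * (\<mu> (take p u) * \<mu> (drop (p + n) u))"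
      by (simp add: mult_ac)
  qed
  also have "\<dots> = K^2 * \<gamma>^n * (\<Sum>(v, w)\<in>\<phi> ` S. \<mu> v * \<mu> w)"
    using \<open>inj_on \<phi> S\<close> by (simp add: sum_distrib_left sum.reindex \<phi>_def)
  also have "\<dots> \<le> K^2 * \<gamma>^n * (\<Sum>(v, w)\<in>V \<times> W. \<mu> v * \<mu> w)"
    using parts assms(2) mu_nonneg finite
    by (intro mult_left_mono sum_mono2 finite_cartesian_product) (auto simp: \<phi>_def)
  also have "\<dots> = K^2 * \<gamma>^n * ((\<Sum>v\<in>V. \<mu> v) * (\<Sum>w\<in>W. \<mu> w))"
    by (simp add: sum_product sum.cartesian_product)
  also have "\<dots> \<le> K^2 * \<gamma>^n * (\<Sum>v\<in>V. \<mu> v)"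
    using sum_mu_le_1[of W] assms(2) mu_nonneg
    by (intro mult_left_mono mult_right_le_one_le sum_nonneg) (auto simp: W_def)
  finally show ?thesis
    by (simp add: S_def V_def)
qed

lemma sum_mu_repeating_windows_le:
  assumes "\<forall>b\<in>Bn X n. \<mu> b \<le> \<gamma> ^ n" "0 \<le> \<gamma>"
  shows "finite T \<Longrightarrow> separated n T \<Longrightarrow> \<forall>p\<in>T. p + n \<le> L \<and> J p < p \<Longrightarrow>
    (\<Sum>u\<in>{u\<in>Bn X L. \<forall>p\<in>T. take n (drop p u) = take n (drop (J p) u)}. \<mu> u) \<le> (K^2 * \<gamma>^n) ^ card T"
proof (induction "card T" arbitrary: T L rule: less_induct)
  case less
  show ?case
  proof (cases "T = {}")
    case True
    then show ?thesis
      using sum_mu_le_1[of _ L] by simp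
  next
    case False
    define p where "p = Max T"
    define T' where "T' = T - {p}"
    define Q where "Q = (\<lambda>v :: 'a list. \<forall>q\<in>T'. take n (drop q v) = take n (drop (J q) v))"
    have p: "p \<in> T" "\<And>q. q \<in> T \<Longrightarrow> q \<le> p"
      using False less.prems(1) by (simp_all add: p_def)
    have card: "card T = Suc (card T')"
      using card_Suc_Diff1[OF less.prems(1) p(1)] by (simp add: T'_def)
    have T': "finite T'" "separated n T'"
      using less.prems(1,2) by (auto simp: T'_def separated_def)
    have "q + n \<le> p \<and> J q < q" if "q \<in> T'" for q
    proof -
      have "q < p" "q \<in> T"
        using that p(2)[of q] by (auto simp: T'_def)
      then show ?thesis
        using less.prems(2,3) p(1) by (auto simp: separated_def)
    qed
    note T' = T' this
    have prefix: "Q (take p u)" if "\<forall>q\<in>T. take n (drop q u) = take n (drop (J q) u)" for u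
      unfolding Q_def
    proof
      fix q assume "q \<in> T'"
      then have "q + n \<le> p" "J q + n \<le> p" "q \<in> T"
        using T'(3) by (fastforce simp: T'_def)+
      then show "take n (drop q (take p u)) = take n (drop (J q) (take p u))"
        using that by (simp add: take_drop_take)
    qed
    have "(\<Sum>u\<in>{u\<in>Bn X L. \<forall>q\<in>T. take n (drop q u) = take n (drop (J q) u)}. \<mu> u)
        \<le> (\<Sum>u\<in>{u\<in>Bn X L. Q (take p u) \<and> take n (drop p u) = take n (drop (J p) u)}. \<mu> u)"
      using prefix p(1) mu_nonneg by (intro sum_mono2) (auto intro: finite_subset[OF _ finite_Bn])
    also have "\<dots> \<le> K^2 * \<gamma>^n * (\<Sum>v\<in>{v\<in>Bn X p. Q v}. \<mu> v)"
      using less.prems(3) p(1) by (intro sum_mu_forced_block_le[OF assms]) auto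
    also have "\<dots> \<le> K^2 * \<gamma>^n * (K^2 * \<gamma>^n) ^ card T'"
      using less.hyps[of T' p] card T' assms(2) unfolding Q_def by (intro mult_left_mono) auto
    finally show ?thesis
      using card by simp
  qed
qed

text \<open>Union bound over the choice of an earlier occurrence \<open>J p < p\<close> of each window \<open>p \<in> T\<close>.\<close>

lemma sum_mu_repeats_le:
  assumes "\<forall>b\<in>Bn X n. \<mu> b \<le> \<gamma> ^ n" "0 \<le> \<gamma>"
    and "finite T" "separated n T" "\<forall>p\<in>T. p + n \<le> L"
  shows "(\<Sum>u\<in>{u\<in>Bn X L. T \<subseteq> repeats n u}. \<mu> u) \<le> (real L * (K^2 * \<gamma>^n)) ^ card T"
proof -
  define JS where "JS = PiE T (\<lambda>p. {..<p})"
  define rep where "rep = (\<lambda>J (u :: 'a list). \<forall>p\<in>T. take n (drop p u) = take n (drop (J p) u))"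
  have "finite JS"
    using assms(3) by (simp add: JS_def finite_PiE)
  have "real (card JS) \<le> real L ^ card T"
  proof -
    have "real (card JS) = (\<Prod>p\<in>T. real p)"
      using assms(3) by (simp add: JS_def card_PiE)
    also have "\<dots> \<le> (\<Prod>p\<in>T. real L)"
      using assms(5) by (intro prod_mono) auto
    finally show ?thesis
      by simp
  qed
  have cover: "(if T \<subseteq> repeats n u then \<mu> u else 0) \<le> (\<Sum>J\<in>JS. if rep J u then \<mu> u else 0)" for u
  proof (cases "T \<subseteq> repeats n u")
    case True
    then obtain J where J: "J \<in> JS" "rep J u"
      by (auto simp: JS_def rep_def elim: repeats_choice)
    then have "(if rep J u then \<mu> u else 0) \<le> (\<Sum>J\<in>JS. if rep J u then \<mu> u else 0)"
      using \<open>finite JS\<close> mu_nonneg by (intro member_le_sum) auto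
    then show ?thesis
      using True J(2) by simp
  qed (simp add: mu_nonneg sum_nonneg)
  have "(\<Sum>u\<in>{u\<in>Bn X L. T \<subseteq> repeats n u}. \<mu> u) = (\<Sum>u\<in>Bn X L. if T \<subseteq> repeats n u then \<mu> u else 0)"
    by (simp add: sum.inter_filter finite_Bn)
  also have "\<dots> \<le> (\<Sum>u\<in>Bn X L. \<Sum>J\<in>JS. if rep J u then \<mu> u else 0)"
    using cover by (rule sum_mono)
  also have "\<dots> = (\<Sum>J\<in>JS. \<Sum>u\<in>{u\<in>Bn X L. rep J u}. \<mu> u)"
    by (simp add: sum.swap[of _ JS] sum.inter_filter finite_Bn)
  also have "\<dots> \<le> (\<Sum>J\<in>JS. (K^2 * \<gamma>^n) ^ card T)"
    using assms(3-5)
    by (intro sum_mono, unfold rep_def, intro sum_mu_repeating_windows_le[OF assms(1,2)])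
      (auto simp: JS_def)
  also have "\<dots> \<le> real L ^ card T * (K^2 * \<gamma>^n) ^ card T"
    using \<open>real (card JS) \<le> real L ^ card T\<close> assms(2) by (simp add: mult_right_mono)
  finally show ?thesis
    by (simp add: power_mult_distrib)
qed

lemma sum_mu_power_card_subwords_le:
  assumes "\<forall>b\<in>Bn X n. \<mu> b \<le> \<gamma> ^ n" "0 \<le> \<gamma>" "0 < \<alpha>" "\<alpha> \<le> 1" "1 \<le> n" "n \<le> L"
  shows "(\<Sum>u\<in>Bn X L. \<mu> u * \<alpha> ^ card (subwords n u))
    \<le> \<alpha> ^ (L - n + 1) * (1 + real L * K^2 * (\<gamma> / \<alpha>) ^ n) ^ (L - n + 1)"
proof -
  define Pos where "Pos = {..L - n}"
  define ST where "ST = {T\<in>Pow Pos. separated n T}"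
  define \<beta> where "\<beta> = 1 / \<alpha> ^ n"
  have "finite ST" "ST \<subseteq> Pow Pos"
    by (auto simp: ST_def Pos_def)
  have "(\<Sum>u\<in>Bn X L. \<mu> u * \<alpha> ^ card (subwords n u))
      \<le> (\<Sum>u\<in>Bn X L. \<mu> u * (\<alpha> ^ (L - n + 1) * (\<Sum>T\<in>{T\<in>ST. T \<subseteq> repeats n u}. \<beta> ^ card T)))"
  proof (intro sum_mono mult_left_mono)
    fix u assume u: "u \<in> Bn X L"
    then have "{T\<in>ST. T \<subseteq> repeats n u} = {T\<in>Pow {..length u - n}. separated n T \<and> T \<subseteq> repeats n u}"
      by (auto simp: ST_def Pos_def length_Bn)
    then show "\<alpha> ^ card (subwords n u) \<le> \<alpha> ^ (L - n + 1) * (\<Sum>T\<in>{T\<in>ST. T \<subseteq> repeats n u}. \<beta> ^ card T)"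
      using power_card_subwords_le[OF assms(3-5), of u] assms(6) length_Bn[OF u] by (simp add: \<beta>_def)
  qed (rule mu_nonneg)
  also have "\<dots> = \<alpha> ^ (L - n + 1) * (\<Sum>T\<in>ST. \<beta> ^ card T * (\<Sum>u\<in>{u\<in>Bn X L. T \<subseteq> repeats n u}. \<mu> u))"
    using \<open>finite ST\<close>
    by (simp add: sum.inter_filter finite_Bn sum_distrib_left sum_distrib_right sum.swap[of _ ST]
        if_distrib[of "\<lambda>x. _ * x"] mult_ac cong: if_cong)
  also have "\<dots> \<le> \<alpha> ^ (L - n + 1) * (\<Sum>T\<in>ST. \<beta> ^ card T * (real L * (K^2 * \<gamma>^n)) ^ card T)"
  proof (rule mult_left_mono, rule sum_mono)
    fix T assume "T \<in> ST"
    then have "finite T" "separated n T" "\<forall>p\<in>T. p + n \<le> L"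
      using assms(6) by (auto simp: ST_def Pos_def intro: finite_subset)
    then show "\<beta> ^ card T * (\<Sum>u\<in>{u\<in>Bn X L. T \<subseteq> repeats n u}. \<mu> u)
        \<le> \<beta> ^ card T * (real L * (K^2 * \<gamma>^n)) ^ card T"
      using sum_mu_repeats_le[OF assms(1,2)] assms(3) by (intro mult_left_mono) (auto simp: \<beta>_def)
  qed (use assms(3) in simp)
  also have "\<dots> = \<alpha> ^ (L - n + 1) * (\<Sum>T\<in>ST. (real L * K^2 * (\<gamma> / \<alpha>) ^ n) ^ card T)"
  proof -
    have "\<beta> * (real L * (K^2 * \<gamma>^n)) = real L * K^2 * (\<gamma> / \<alpha>) ^ n"
      by (simp add: \<beta>_def power_divide)
    then show ?thesis
      by (simp only: power_mult_distrib[symmetric])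
  qed
  also have "\<dots> \<le> \<alpha> ^ (L - n + 1) * (\<Sum>T\<in>Pow Pos. (real L * K^2 * (\<gamma> / \<alpha>) ^ n) ^ card T)"
    using \<open>ST \<subseteq> Pow Pos\<close> assms(2,3) by (intro mult_left_mono sum_mono2) (auto simp: Pos_def)
  also have "\<dots> = \<alpha> ^ (L - n + 1) * (1 + real L * K^2 * (\<gamma> / \<alpha>) ^ n) ^ (L - n + 1)"
    by (simp add: sum_Pow_power_card Pos_def)
  finally show ?thesis .
qed

lemma expected_psi_le:
  assumes "\<forall>b\<in>Bn X n. \<mu> b \<le> \<gamma> ^ n" "0 \<le> \<gamma>" "0 < \<alpha>" "\<alpha> \<le> 1" "1 \<le> n" "n \<le> k"
    and "E_set M X \<delta> n \<noteq> {}"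
  shows "expected_psi M X f \<delta> \<alpha> n k
    \<le> K * exp (P * real k) * (\<alpha> ^ (k - n + 1) * (1 + real k * K^2 * (\<gamma> / \<alpha>) ^ n) ^ (k - n + 1))"
proof -
  have "1 \<le> card (E_set M X \<delta> n)"
    using assms(7) finite_subset[OF E_set_subset_Bn finite_Bn] by (simp add: Suc_le_eq card_gt_0_iff)
  then have "expected_psi M X f \<delta> \<alpha> n k \<le> (\<Sum>u\<in>G_set M X \<delta> n k. exp (Smf X f u) * \<alpha> ^ card (subwords n u))"
    unfolding expected_psi_eq[OF less_imp_le[OF assms(3)] assms(4)] using assms(3)
    by (intro mult_left_le_one_le sum_nonneg) auto
  also have "\<dots> \<le> (\<Sum>u\<in>Bn X k. exp (Smf X f u) * \<alpha> ^ card (subwords n u))"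
    using G_set_subset_Bn assms(3) by (intro sum_mono2 finite_Bn) auto
  also have "\<dots> \<le> (\<Sum>u\<in>Bn X k. K * exp (P * real k) * (\<mu> u * \<alpha> ^ card (subwords n u)))"
    using exp_Smf_le assms(3,5,6) by (intro sum_mono) (simp add: mult_right_mono mult.assoc)
  also have "\<dots> \<le> K * exp (P * real k) * (\<alpha> ^ (k - n + 1) * (1 + real k * K^2 * (\<gamma> / \<alpha>) ^ n) ^ (k - n + 1))"
    using sum_mu_power_card_subwords_le[OF assms(1-6)] K_gt_1 by (simp add: sum_distrib_left[symmetric])
  finally show ?thesis .
qed

section \<open>Block entropies and typical words\<close>

lemma ln_mu_split:
  assumes "w \<in> Bn X (m + n)" "1 \<le> m" "1 \<le> n"
  shows "\<bar>ln (\<mu> w) - ln (\<mu> (take m w)) - ln (\<mu> (drop m w))\<bar> \<le> 3 * ln K"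
proof -
  obtain x where x: "x \<in> X" "w = word_at x 0 (m + n)"
    using assms(1) by (auto simp: Bn_def)
  have y: "(shift ^^ m) x \<in> X"
    by (rule is_SFT_funpow_shift_closed[OF SFT x(1)])
  have take: "take m w = word_at x 0 m" and drop: "drop m w = word_at ((shift ^^ m) x) 0 n"
    using x(2) by (simp_all add: word_at_add word_at_funpow_shift)
  have pos: "0 < \<mu> (take m w)" "0 < \<mu> (drop m w)" "0 < \<mu> w"
    using mu_pos take_Bn[OF SFT assms(1)] drop_Bn[OF SFT assms(1)] assms(1) by auto
  have "\<mu> w \<le> K * \<mu> (take m w) * \<mu> (drop m w)"
    using quasi_mult[of "take m w" "drop m w"] Bn_subset_lang assms(1) by auto
  then have "ln (\<mu> w) \<le> ln (K * \<mu> (take m w) * \<mu> (drop m w))"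
    using pos by simp
  then have upper: "ln (\<mu> w) \<le> ln K + ln (\<mu> (take m w)) + ln (\<mu> (drop m w))"
    using pos K_gt_1 by (simp add: ln_mult)
  have "\<mu> (take m w) * \<mu> (drop m w)
      \<le> (K * exp (- P * real m + birkhoff f m x)) * (K * exp (- P * real n + birkhoff f n ((shift ^^ m) x)))"
    using mu_le_gibbs[OF assms(2) x(1)] mu_le_gibbs[OF assms(3) y] take drop pos
    by (intro mult_mono) auto
  also have "\<dots> = K^2 * exp (- P * real (m + n) + birkhoff f (m + n) x)"
    by (simp add: birkhoff_add power2_eq_square mult_exp_exp algebra_simps)
  also have "\<dots> \<le> K^2 * (K * \<mu> w)"
    using gibbs_le_mu[of "m + n" x] assms x K_gt_1 by (intro mult_left_mono) auto
  finally have "\<mu> (take m w) * \<mu> (drop m w) \<le> K^3 * \<mu> w"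
    by (simp add: power3_eq_cube power2_eq_square mult_ac)
  then have "ln (\<mu> (take m w) * \<mu> (drop m w)) \<le> ln (K^3 * \<mu> w)"
    using pos by (intro ln_mono) auto
  then have lower: "ln (\<mu> (take m w)) + ln (\<mu> (drop m w)) \<le> 3 * ln K + ln (\<mu> w)"
    using pos K_gt_1 by (simp add: ln_mult ln_realpow)
  show ?thesis
    using upper lower K_gt_1 by (simp add: abs_le_iff)
qed

lemma measure_funpow_shift_vimage:
  assumes "A \<in> sets M"
  shows "(shift ^^ m) -` A \<in> sets M \<and> measure M ((shift ^^ m) -` A) = measure M A"
proof (induction m)
  case (Suc m)
  have vimage: "(shift ^^ Suc m) -` A = shift -` ((shift ^^ m) -` A)"
    by (simp only: funpow_Suc_right vimage_comp)
  show ?case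
    unfolding vimage using measure_preserving Suc by auto
qed (use assms in simp)

lemma measure_Int_X:
  assumes "A \<in> sets M"
  shows "measure M (X \<inter> A) = measure M A"
proof (rule measure_eq_AE)
  have "AE x in M. x \<in> X"
    using prob_space.prob_eq_1[OF prob_space_M X_in_sets] measure_X by simp
  then show "AE x in M. x \<in> X \<inter> A \<longleftrightarrow> x \<in> A"
    by eventually_elim simp
qed (use assms X_in_sets in auto)

lemma sum_mu_take_eq:
  assumes "u \<in> Bn X m"
  shows "(\<Sum>w\<in>{w\<in>Bn X (m + n). take m w = u}. \<mu> w) = \<mu> u"
proof -
  have lu: "length u = m"
    using length_Bn[OF assms] .
  have "(\<Union>w\<in>{w\<in>Bn X (m + n). take m w = u}. cyl X w) = cyl X u"
  proof (intro equalityI subsetI)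
    fix x assume "x \<in> (\<Union>w\<in>{w\<in>Bn X (m + n). take m w = u}. cyl X w)"
    then obtain w where "x \<in> X" "take m w = u" "word_at x 0 (m + n) = w"
      by (auto simp: cyl_def dest: length_Bn)
    then show "x \<in> cyl X u"
      using lu by (auto simp: cyl_def word_at_add)
  next
    fix x assume "x \<in> cyl X u"
    then show "x \<in> (\<Union>w\<in>{w\<in>Bn X (m + n). take m w = u}. cyl X w)"
      using lu word_at_in_Bn[of x X "m + n"]
      by (intro UN_I[of "word_at x 0 (m + n)"]) (auto simp: cyl_def word_at_add)
  qed
  then show ?thesis
    using sum_mu_eq_measure[of "{w\<in>Bn X (m + n). take m w = u}" "m + n"] by (simp add: mu_def)
qed

lemma sum_mu_drop_eq:
  assumes "v \<in> Bn X n"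
  shows "(\<Sum>w\<in>{w\<in>Bn X (m + n). drop m w = v}. \<mu> w) = \<mu> v"
proof -
  have lv: "length v = n"
    using length_Bn[OF assms] .
  have "(\<Union>w\<in>{w\<in>Bn X (m + n). drop m w = v}. cyl X w) = X \<inter> (shift ^^ m) -` cyl X v"
  proof (intro equalityI subsetI)
    fix x assume "x \<in> (\<Union>w\<in>{w\<in>Bn X (m + n). drop m w = v}. cyl X w)"
    then obtain w where "x \<in> X" "drop m w = v" "word_at x 0 (m + n) = w"
      by (auto simp: cyl_def dest: length_Bn)
    then show "x \<in> X \<inter> (shift ^^ m) -` cyl X v"
      using lv is_SFT_funpow_shift_closed[OF SFT] by (auto simp: cyl_def word_at_add word_at_funpow_shift)
  next
    fix x assume "x \<in> X \<inter> (shift ^^ m) -` cyl X v"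
    then show "x \<in> (\<Union>w\<in>{w\<in>Bn X (m + n). drop m w = v}. cyl X w)"
      using lv word_at_in_Bn[of x X "m + n"]
      by (intro UN_I[of "word_at x 0 (m + n)"]) (auto simp: cyl_def word_at_add word_at_funpow_shift)
  qed
  then have "(\<Sum>w\<in>{w\<in>Bn X (m + n). drop m w = v}. \<mu> w) = measure M (X \<inter> (shift ^^ m) -` cyl X v)"
    using sum_mu_eq_measure[of "{w\<in>Bn X (m + n). drop m w = v}" "m + n"] by simp
  also have "\<dots> = \<mu> v"
    using measure_Int_X measure_funpow_shift_vimage[OF cyl_in_sets] by (simp add: mu_def)
  finally show ?thesis .
qed

definition block_entropy :: "nat \<Rightarrow> real" where
  "block_entropy m = (\<Sum>w\<in>Bn X m. - \<mu> w * ln (\<mu> w))"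

lemma sum_mu_ln_take: "(\<Sum>w\<in>Bn X (m + n). \<mu> w * ln (\<mu> (take m w))) = - block_entropy m"
proof -
  have "(\<Sum>w\<in>Bn X (m + n). \<mu> w * ln (\<mu> (take m w)))
      = (\<Sum>u\<in>Bn X m. \<Sum>w\<in>{w\<in>Bn X (m + n). take m w = u}. \<mu> w * ln (\<mu> (take m w)))"
    using take_Bn[OF SFT] by (intro sum.group[symmetric] finite_Bn) auto
  also have "\<dots> = (\<Sum>u\<in>Bn X m. (\<Sum>w\<in>{w\<in>Bn X (m + n). take m w = u}. \<mu> w) * ln (\<mu> u))"
    by (intro sum.cong refl) (auto simp: sum_distrib_right)
  also have "\<dots> = - block_entropy m"
    using sum_mu_take_eq by (simp add: block_entropy_def sum_negf)
  finally show ?thesis .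
qed

lemma sum_mu_ln_drop: "(\<Sum>w\<in>Bn X (m + n). \<mu> w * ln (\<mu> (drop m w))) = - block_entropy n"
proof -
  have "(\<Sum>w\<in>Bn X (m + n). \<mu> w * ln (\<mu> (drop m w)))
      = (\<Sum>v\<in>Bn X n. \<Sum>w\<in>{w\<in>Bn X (m + n). drop m w = v}. \<mu> w * ln (\<mu> (drop m w)))"
    using drop_Bn[OF SFT] by (intro sum.group[symmetric] finite_Bn) auto
  also have "\<dots> = (\<Sum>v\<in>Bn X n. (\<Sum>w\<in>{w\<in>Bn X (m + n). drop m w = v}. \<mu> w) * ln (\<mu> v))"
    by (intro sum.cong refl) (auto simp: sum_distrib_right)
  also have "\<dots> = - block_entropy n"
    using sum_mu_drop_eq by (simp add: block_entropy_def sum_negf)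
  finally show ?thesis .
qed

lemma block_entropy_almost_additive:
  assumes "1 \<le> m" "1 \<le> n"
  shows "\<bar>block_entropy (m + n) - block_entropy m - block_entropy n\<bar> \<le> 3 * ln K"
proof -
  have "block_entropy (m + n) - block_entropy m - block_entropy n
      = block_entropy (m + n) + (\<Sum>w\<in>Bn X (m + n). \<mu> w * ln (\<mu> (take m w)))
        + (\<Sum>w\<in>Bn X (m + n). \<mu> w * ln (\<mu> (drop m w)))"
    by (simp add: sum_mu_ln_take sum_mu_ln_drop)
  also have "\<dots> = - (\<Sum>w\<in>Bn X (m + n). \<mu> w * (ln (\<mu> w) - ln (\<mu> (take m w)) - ln (\<mu> (drop m w))))"
    by (simp add: block_entropy_def[of "m + n"] sum_subtractf sum_negf sum.distrib algebra_simps)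
  also have "\<bar>\<dots>\<bar> \<le> (\<Sum>w\<in>Bn X (m + n). \<mu> w * (3 * ln K))"
    using ln_mu_split[OF _ assms] mu_nonneg
    by (auto simp: abs_mult intro!: order_trans[OF sum_abs] sum_mono mult_left_mono)
  also have "\<dots> = 3 * ln K"
    by (simp add: sum_distrib_right[symmetric] sum_mu_Bn)
  finally show ?thesis .
qed

lemma block_entropy_tendsto: "(\<lambda>n. block_entropy n / real n) \<longlonglongrightarrow> entropy X M"
proof -
  have "convergent (\<lambda>n. block_entropy n / real n)"
    using block_entropy_almost_additive by (rule almost_additive_convergent)
  then show ?thesis
    by (simp add: convergent_LIMSEQ_iff entropy_def block_entropy_def)
qed

lemma ln_mu_letters_bounded: "\<exists>C. \<forall>a\<in>Bn X 1. \<bar>ln (\<mu> a)\<bar> \<le> C"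
  by (intro exI[of _ "\<Sum>a\<in>Bn X 1. \<bar>ln (\<mu> a)\<bar>"] ballI member_le_sum) (auto simp: finite_Bn)

text \<open>Sliding a window by one letter changes \<open>ln \<mu>\<close> by a bounded amount: compare both windows
  with the word of length \<open>n + 1\<close> covering them.\<close>

lemma ln_mu_window_step:
  assumes "x \<in> X" "1 \<le> n" "\<forall>a\<in>Bn X 1. \<bar>ln (\<mu> a)\<bar> \<le> C"
  shows "\<bar>ln (\<mu> (word_at x (int (Suc j)) n)) - ln (\<mu> (word_at x (int j) n))\<bar> \<le> 6 * ln K + 2 * C"
proof -
  define y where "y = (shift ^^ j) x"
  define z where "z = word_at y 0 (n + 1)"
  have z: "z \<in> Bn X (n + 1)" "z \<in> Bn X (1 + n)"
    using word_at_in_Bn[OF is_SFT_funpow_shift_closed[OF SFT assms(1)]] by (simp_all add: z_def y_def)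
  have "take n z = word_at x (int j) n"
    unfolding z_def word_at_add by (simp add: y_def word_at_funpow_shift)
  moreover have "drop 1 z = word_at x (int (Suc j)) n"
    unfolding z_def add.commute[of n 1] word_at_add by (simp add: y_def word_at_funpow_shift)
  moreover have "\<bar>ln (\<mu> (drop n z))\<bar> \<le> C" "\<bar>ln (\<mu> (take 1 z))\<bar> \<le> C"
    using assms(3) drop_Bn[OF SFT z(1)] take_Bn[OF SFT z(2)] by auto
  ultimately show ?thesis
    using ln_mu_split[OF z(1) assms(2)] ln_mu_split[OF z(2) _ assms(2)] by (simp add: abs_le_iff)
qed

lemma E_set_nonempty_of_window_walk:
  assumes "x \<in> X" "1 \<le> n" "\<forall>a\<in>Bn X 1. \<bar>ln (\<mu> a)\<bar> \<le> C"
    and "6 * ln K + 2 * C < 2 * \<delta> * real n"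
    and "real n * (entropy X M + \<delta>) \<le> - ln (\<mu> (word_at x 0 n))"
    and "- ln (\<mu> (word_at x (int N) n)) \<le> real n * (entropy X M - \<delta>)"
  shows "E_set M X \<delta> n \<noteq> {}"
proof -
  define V where "V = (\<lambda>j. - ln (\<mu> (word_at x (int j) n)))"
  have "0 \<le> C"
    using assms(3) Bn_nonempty[of 1] by fastforce
  then obtain j where j: "real n * (entropy X M - \<delta>) < V j" "V j < real n * (entropy X M + \<delta>)"
    using small_steps_visit_interval[of "real n * (entropy X M + \<delta>)" V N "real n * (entropy X M - \<delta>)"
        "6 * ln K + 2 * C"] ln_mu_window_step[OF assms(1-3)] assms(4-6) K_gt_1
    by (force simp: V_def abs_minus_commute algebra_simps)
  have "word_at x (int j) n \<in> Bn X n"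
    using word_at_in_Bn is_SFT_funpow_shift_closed[OF SFT assms(1), of j]
    by (metis add_0 word_at_funpow_shift)
  moreover have "\<bar>- (1 / real n) * ln (\<mu> (word_at x (int j) n)) - entropy X M\<bar> < \<delta>"
    using j assms(2) by (simp add: V_def abs_less_iff field_simps)
  ultimately show ?thesis
    by (auto simp: E_set_def)
qed

lemma words_off_entropy:
  assumes "1 \<le> n" "\<bar>block_entropy n / real n - entropy X M\<bar> < \<delta>" "E_set M X \<delta> n = {}"
  obtains w w' where "w \<in> Bn X n" "real n * (entropy X M + \<delta>) \<le> - ln (\<mu> w)"
    and "w' \<in> Bn X n" "- ln (\<mu> w') \<le> real n * (entropy X M - \<delta>)"
proof -
  have off: "\<delta> \<le> \<bar>- ln (\<mu> w) / real n - entropy X M\<bar>" if "w \<in> Bn X n" for w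
    using assms(3) that by (auto simp: E_set_def)
  have avg: "block_entropy n = (\<Sum>w\<in>Bn X n. \<mu> w * - ln (\<mu> w))"
    by (simp add: block_entropy_def)
  obtain w w' where w: "w \<in> Bn X n" "block_entropy n \<le> - ln (\<mu> w)"
    and w': "w' \<in> Bn X n" "- ln (\<mu> w') \<le> block_entropy n"
    using exists_above_below_weighted_average[OF finite_Bn Bn_nonempty _ sum_mu_Bn, of n "\<lambda>w. - ln (\<mu> w)"]
      mu_pos unfolding avg by blast
  have "real n * (entropy X M + \<delta>) \<le> - ln (\<mu> w)"
    using off[OF w(1)] w(2) assms(1,2) by (simp add: abs_less_iff field_simps) arith
  moreover have "- ln (\<mu> w') \<le> real n * (entropy X M - \<delta>)"
    using off[OF w'(1)] w'(2) assms(1,2) by (simp add: abs_less_iff field_simps) arith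
  ultimately show ?thesis
    using that w(1) w'(1) by blast
qed

end

section \<open>Mixing and the growth rate\<close>

locale mixing_gibbs_measure = gibbs_measure +
  fixes g0 :: nat
  assumes mixing: "\<And>g m u v. g0 \<le> g \<Longrightarrow> u \<in> Bn X m \<Longrightarrow>
    (1 / K) * mu M X u * mu M X v \<le> measure M (cyl X u \<inter> (shift ^^ (m + g)) -` cyl X v)"
begin

lemma eventually_E_set_nonempty:
  assumes "0 < \<delta>"
  shows "\<forall>\<^sub>F n in sequentially. E_set M X \<delta> n \<noteq> {}"
proof -
  obtain C where C: "\<forall>a\<in>Bn X 1. \<bar>ln (\<mu> a)\<bar> \<le> C"
    using ln_mu_letters_bounded by blast
  have "\<forall>\<^sub>F n in sequentially. \<bar>block_entropy n / real n - entropy X M\<bar> < \<delta>"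
    using block_entropy_tendsto assms by (simp add: tendsto_iff dist_real_def)
  moreover have "\<forall>\<^sub>F n in sequentially. 6 * ln K + 2 * C < 2 * \<delta> * real n"
    using assms by real_asymp
  ultimately show ?thesis
    using eventually_ge_at_top[of 1]
  proof eventually_elim
    case (elim n)
    show ?case
    proof
      assume "E_set M X \<delta> n = {}"
      then obtain w w' where w: "w \<in> Bn X n" "real n * (entropy X M + \<delta>) \<le> - ln (\<mu> w)"
        and w': "w' \<in> Bn X n" "- ln (\<mu> w') \<le> real n * (entropy X M - \<delta>)"
        using words_off_entropy elim by metis
      have "0 < (1 / K) * \<mu> w * \<mu> w'"
        using K_gt_1 mu_pos w(1) w'(1) by simp
      then have "cyl X w \<inter> (shift ^^ (n + g0)) -` cyl X w' \<noteq> {}"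
        using mixing[OF order_refl w(1), of w'] by auto
      then obtain x where "x \<in> cyl X w" "(shift ^^ (n + g0)) x \<in> cyl X w'"
        by blast
      then have "x \<in> X" "word_at x 0 n = w" "word_at x (int (n + g0)) n = w'"
        using length_Bn w(1) w'(1) by (auto simp: cyl_def word_at_funpow_shift)
      then show False
        using E_set_nonempty_of_window_walk[OF _ _ C, of x n \<delta> "n + g0"] elim w w' \<open>E_set M X \<delta> n = {}\<close>
        by simp
    qed
  qed
qed

text \<open>A point whose windows at \<open>0\<close> and at \<open>k - n\<close> both read \<open>w\<close> lies in a cylinder of \<open>G_set\<close>.\<close>

lemma measure_G_set_ge:
  assumes "w \<in> E_set M X \<delta> n" "2 * n + g0 \<le> k"
  shows "(1 / K) * \<mu> w * \<mu> w \<le> measure M (\<Union>u\<in>G_set M X \<delta> n k. cyl X u)"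
proof -
  have w: "w \<in> Bn X n" "length w = n"
    using assms(1) E_set_subset_Bn length_Bn by blast+
  have "cyl X w \<inter> (shift ^^ (k - n)) -` cyl X w \<subseteq> (\<Union>u\<in>G_set M X \<delta> n k. cyl X u)"
  proof
    fix x assume "x \<in> cyl X w \<inter> (shift ^^ (k - n)) -` cyl X w"
    then have x: "x \<in> X" "word_at x 0 n = w" "word_at x (int (k - n)) n = w"
      using w(2) by (auto simp: cyl_def word_at_funpow_shift)
    have "take n (word_at x 0 k) = w" "drop (k - n) (word_at x 0 k) = w"
      using x assms(2) take_drop_word_at[of 0 n k x 0] take_drop_word_at[of "k - n" n k x 0] by simp_all
    then have "word_at x 0 k \<in> G_set M X \<delta> n k"
      using word_at_in_Bn[OF x(1)] assms(1) by (simp add: G_set_def)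
    then show "x \<in> (\<Union>u\<in>G_set M X \<delta> n k. cyl X u)"
      using x(1) by (intro UN_I[of "word_at x 0 k"]) (auto simp: cyl_def)
  qed
  moreover have "finite (G_set M X \<delta> n k)"
    using G_set_subset_Bn finite_Bn by (rule finite_subset)
  ultimately have "measure M (cyl X w \<inter> (shift ^^ (n + (k - 2 * n))) -` cyl X w)
      \<le> measure M (\<Union>u\<in>G_set M X \<delta> n k. cyl X u)"
    using assms(2) cyl_in_sets
    by (intro finite_measure.finite_measure_mono[OF prob_space.finite_measure[OF prob_space_M]])
      (auto simp: algebra_simps)
  moreover have "g0 \<le> k - 2 * n"
    using assms(2) by simp
  ultimately show ?thesis
    using mixing[of "k - 2 * n" w n w] w(1) by simp
qed

lemma mu_ge_of_E_set:
  assumes "w \<in> E_set M X \<delta> n" "1 \<le> n"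
  shows "exp (- real n * (entropy X M + \<delta>)) \<le> \<mu> w"
proof -
  have "- ln (\<mu> w) / real n < entropy X M + \<delta>"
    using assms(1) by (auto simp: E_set_def abs_less_iff)
  then have "- real n * (entropy X M + \<delta>) \<le> ln (\<mu> w)"
    using assms(2) by (simp add: field_simps)
  then show ?thesis
    using mu_pos assms(1) E_set_subset_Bn by (metis exp_le_cancel_iff exp_ln subsetD)
qed

lemma expected_psi_ge_exponential:
  assumes "0 < \<alpha>" "\<alpha> \<le> 1" "1 \<le> n" "2 * n + g0 \<le> k" "E_set M X \<delta> n \<noteq> {}"
  shows "1 / K^2 * (exp (- 2 * (entropy X M + \<delta>)) / real CARD('a)) ^ n * \<alpha> ^ (k - n + 1) * exp (P * real k)
    \<le> expected_psi M X f \<delta> \<alpha> n k"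
proof -
  obtain w where w: "w \<in> E_set M X \<delta> n"
    using assms(5) by blast
  define e where "e = exp (- real n * (entropy X M + \<delta>))"
  define F where "F = (1 / K) * \<alpha> ^ (k - n + 1) * exp (P * real k)"
  have "e * e \<le> \<mu> w * \<mu> w"
    using mu_ge_of_E_set[OF w assms(3)] mu_nonneg by (intro mult_mono) (auto simp: e_def)
  then have "(1 / K) * e * e \<le> (1 / K) * \<mu> w * \<mu> w"
    using K_gt_1 by (simp add: mult.assoc divide_right_mono)
  then have "(1 / K) * e * e \<le> measure M (\<Union>u\<in>G_set M X \<delta> n k. cyl X u)"
    using measure_G_set_ge[OF w assms(4)] by linarith
  moreover have "1 / real CARD('a) ^ n \<le> 1 / real (card (E_set M X \<delta> n))"
  proof -
    have "card (E_set M X \<delta> n) \<le> CARD('a) ^ n"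
      using card_mono[OF finite_Bn E_set_subset_Bn] card_Bn_le order_trans by blast
    moreover have "0 < card (E_set M X \<delta> n)"
      using assms(5) finite_subset[OF E_set_subset_Bn finite_Bn] by (simp add: card_gt_0_iff)
    ultimately show ?thesis
      by (intro divide_left_mono) (simp_all flip: of_nat_power)
  qed
  moreover have "0 \<le> F"
    using K_gt_1 assms(1) by (simp add: F_def)
  ultimately have "1 / real CARD('a) ^ n * F * ((1 / K) * e * e)
      \<le> 1 / real (card (E_set M X \<delta> n)) * F * measure M (\<Union>u\<in>G_set M X \<delta> n k. cyl X u)"
    using K_gt_1 by (intro mult_mono) (auto simp: e_def)
  also have "\<dots> \<le> expected_psi M X f \<delta> \<alpha> n k"
    using expected_psi_ge[OF assms(1,2)] assms(4) by (simp add: F_def mult_ac)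
  finally show ?thesis
    by (simp add: F_def e_def power2_eq_square mult_exp_exp exp_of_nat_mult[symmetric]
        field_simps)
qed

lemma ln_expected_psi_tendsto:
  fixes k :: "nat \<Rightarrow> nat"
  assumes "\<forall>\<^sub>F n in sequentially. \<forall>b\<in>Bn X n. \<mu> b \<le> \<gamma> ^ n" "0 < \<gamma>" "\<gamma> < \<alpha>" "\<alpha> \<le> 1" "0 < \<delta>"
    and "\<forall>n. n \<le> k n" "(\<lambda>n. real n / real (k n)) \<longlonglongrightarrow> 0" "\<forall>\<^sub>F n in sequentially. real (k n) \<le> real n ^ 2"
  shows "(\<lambda>n. ln (expected_psi M X f \<delta> \<alpha> n (k n)) / real (k n)) \<longlonglongrightarrow> P + ln \<alpha>"
proof -
  define D where "D = exp (- 2 * (entropy X M + \<delta>)) / real CARD('a)"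
  define lower where "lower n = 1 / K^2 * D ^ n * \<alpha> ^ (k n - n + 1) * exp (P * real (k n))" for n
  define upper where "upper n = K * exp (P * real (k n)) *
    (\<alpha> ^ (k n - n + 1) * (1 + real (k n) * K^2 * (\<gamma> / \<alpha>) ^ n) ^ (k n - n + 1))" for n
  have "0 < \<alpha>" "0 < D"
    using assms(2,3) by (simp_all add: D_def)
  have "\<forall>\<^sub>F n in sequentially. real n / real (k n) < 1 / 3"
    using assms(7) by (rule order_tendstoD) simp
  then have "\<forall>\<^sub>F n in sequentially. 0 < lower n \<and> lower n \<le> expected_psi M X f \<delta> \<alpha> n (k n)
      \<and> expected_psi M X f \<delta> \<alpha> n (k n) \<le> upper n"
    using eventually_E_set_nonempty[OF assms(5)] assms(1) eventually_ge_at_top[of "g0 + 1"]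
  proof eventually_elim
    case (elim n)
    then have "2 * n + g0 \<le> k n"
      using assms(6)[rule_format, of n] by (simp add: field_simps)
    then show ?case
      using elim expected_psi_ge_exponential[OF \<open>0 < \<alpha>\<close> assms(4)]
        expected_psi_le[OF _ _ \<open>0 < \<alpha>\<close> assms(4) _ assms(6)[rule_format]] assms(2)
        \<open>0 < \<alpha>\<close> \<open>0 < D\<close> K_gt_1
      by (simp add: lower_def upper_def D_def)
  qed
  moreover have "(\<lambda>n. ln (lower n) / real (k n)) \<longlonglongrightarrow> P + ln \<alpha>"
    unfolding lower_def using K_gt_1 \<open>0 < \<alpha>\<close> \<open>0 < D\<close> assms(6,7)
    by (intro tendsto_ln_exponential_div) auto
  moreover have "(\<lambda>n. ln (upper n) / real (k n)) \<longlonglongrightarrow> P + ln \<alpha>"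
    unfolding upper_def
  proof (rule tendsto_ln_exponential_div_upper[OF _ \<open>0 < \<alpha>\<close> _ _ _ assms(6-8)])
    show "0 < K" "0 \<le> K^2"
      using K_gt_1 by simp_all
    show "0 < \<gamma> / \<alpha>" "\<gamma> / \<alpha> < 1"
      using assms(2,3) \<open>0 < \<alpha>\<close> by simp_all
  qed
  ultimately show ?thesis
    by (rule tendsto_ln_div_squeeze)
qed

end

theorem mainTheorem12:
  fixes X :: "(int \<Rightarrow> 'a::finite) set"
    and f :: "(int \<Rightarrow> 'a) \<Rightarrow> real"
    and M :: "(int \<Rightarrow> 'a) measure"
    and P K \<alpha> \<gamma> \<delta> :: real
    and n0 :: nat
    and k :: "nat \<Rightarrow> nat"
  assumes SFT: "is_SFT X" and nontriv: "nontrivial X" and mixing: "top_mixing X"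
    and hol: "holder_cont X f"
    and P_def: "P = pressure X f"
    and eq: "equilibrium_state X f M"
    and uniq: "\<forall>\<nu>. equilibrium_state X f \<nu> \<longrightarrow> \<nu> = M"
    and K1: "K > 1"
    and gibbs: "\<forall>m\<ge>1. \<forall>x\<in>X.
        1 / K \<le> mu M X (word_at x 0 m) / exp (- P * real m + birkhoff f m x) \<and>
        mu M X (word_at x 0 m) / exp (- P * real m + birkhoff f m x) \<le> K"
    and quasi_mult: "\<forall>u v. u @ v \<in> lang X \<longrightarrow>
        mu M X (u @ v) \<le> K * mu M X u * mu M X v \<and>
        measure M (cyl X u \<inter> (shift ^^ length u) -` cyl X v) / mu M X u \<le> K * mu M X v"
    and mix_lower: "\<exists>g0::nat. g0 \<ge> 1 \<and> (\<forall>g\<ge>g0. \<forall>m. \<forall>u\<in>Bn X m. \<forall>v.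
        measure M (cyl X u \<inter> (shift ^^ (m + g)) -` cyl X v) \<ge> (1 / K) * mu M X u * mu M X v)"
    and alpha: "gamma0 M X < \<alpha>" "\<alpha> \<le> 1"
    and gamma: "gamma0 M X < \<gamma>" "\<gamma> < \<alpha>"
    and n0: "\<forall>u\<in>lang X. length u \<ge> n0 \<longrightarrow> mu M X u \<le> \<gamma> ^ length u"
    and delta: "0 < \<delta>" "\<delta> < (1/4) * ln (\<alpha> / \<gamma>)"
    and k_ge: "\<forall>n. n \<le> k n"
    and k_lim: "(\<lambda>n. real n / real (k n)) \<longlonglongrightarrow> 0"
    and k_small: "(\<lambda>n. real (k n)) \<in> o(\<lambda>n. real n ^ 2 / ln (real n))"
  shows "(\<forall>n\<ge>n0. expected_psi M X f \<delta> \<alpha> n (k n) \<ge>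
            (1 / real (card (E_set M X \<delta> n))) * (1 / K) * \<alpha> ^ (k n - n + 1) * exp (P * real (k n)) *
            measure M (\<Union>u\<in>G_set M X \<delta> n (k n). cyl X u))
       \<and> (\<lambda>n. ln (expected_psi M X f \<delta> \<alpha> n (k n)) / real (k n)) \<longlonglongrightarrow> P + ln \<alpha>"
proof -
  obtain g0 :: nat where g0: "\<forall>g\<ge>g0. \<forall>m. \<forall>u\<in>Bn X m. \<forall>v.
      (1 / K) * mu M X u * mu M X v \<le> measure M (cyl X u \<inter> (shift ^^ (m + g)) -` cyl X v)"
    using mix_lower by blast
  interpret mixing_gibbs_measure X f M P K g0
  proof unfold_locales
    show "inv_prob_on X M"
      using eq by (simp add: equilibrium_state_def)
    show "mu M X (u @ v) \<le> K * mu M X u * mu M X v" if "u @ v \<in> lang X" for u v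
      using quasi_mult that by blast
  qed (use SFT K1 gibbs g0 in auto)
  have "0 < \<gamma>"
    using pos_of_mu_le_power[OF n0] .
  then have "0 < \<alpha>"
    using gamma(2) by linarith
  have "\<forall>\<^sub>F n in sequentially. \<forall>b\<in>Bn X n. mu M X b \<le> \<gamma> ^ n"
    using eventually_ge_at_top[of n0] by eventually_elim (use n0 Bn_subset_lang length_Bn in fastforce)
  then show ?thesis
    using expected_psi_ge[OF \<open>0 < \<alpha>\<close> alpha(2)] k_ge
      ln_expected_psi_tendsto[OF _ \<open>0 < \<gamma>\<close> gamma(2) alpha(2) delta(1) k_ge k_lim
        eventually_le_square_of_smallo[OF k_small]]
    by blast
qed

end
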